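(* For every $n\ge1$, there is an equivalence relation on $\mathbb{N}$ which is universal for $\Sigma^0_n$ equivalence relations on $\mathbb{N}$ under computable reductions and which is $\Pi^0_{n-1}$-graphable with diameter $3$.
   Context: $E$ is universal for $\Sigma^0_n$ equivalence relations on $\mathbb{N}$ if $E$ is a $\Sigma^0_n$ equivalence relation on $\mathbb{N}$ and every $\Sigma^0_n$ equivalence relation $F$ on $\mathbb{N}$ admits a total computable $f:\mathbb{N}\to\mathbb{N}$ with $nFm\iff f(n)Ef(m)$. $\Pi^0_0$ means computable. $E$ is $\Gamma$-graphable with diameter $k$ if there is a simple undirected graph $G$ in $\Gamma$ whose connectedness relation equals $E$ and $k$ is the least integer such that any two $G$-connected points are joined by a path of length at most $k$. *)

theory Defs
  imports Main
begin

inductive recfn :: "nat \<Rightarrow> (nat list \<Rightarrow> nat) \<Rightarrow> bool" where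
  zero: "recfn n (\<lambda>_. 0)"
| succ: "recfn 1 (\<lambda>xs. Suc (hd xs))"
| proj: "i < n \<Longrightarrow> recfn n (\<lambda>xs. xs ! i)"
| comp: "recfn m f \<Longrightarrow> length gs = m \<Longrightarrow> (\<forall>g\<in>set gs. recfn n g) \<Longrightarrow>
         recfn n (\<lambda>xs. f (map (\<lambda>g. g xs) gs))"
| prim: "recfn n g \<Longrightarrow> recfn (n + 2) h \<Longrightarrow>
         recfn (Suc n) (\<lambda>xs. rec_nat (g (tl xs)) (\<lambda>k r. h (k # r # tl xs)) (hd xs))"
| mu: "recfn (Suc n) g \<Longrightarrow> (\<forall>xs. length xs = n \<longrightarrow> (\<exists>y. g (y # xs) = 0)) \<Longrightarrow>
       recfn n (\<lambda>xs. LEAST y. g (y # xs) = 0)"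

definition computable_fun :: "(nat \<Rightarrow> nat) \<Rightarrow> bool" where
  "computable_fun f \<longleftrightarrow> (\<exists>g. recfn 1 g \<and> (\<forall>x. g [x] = f x))"

definition computable_rel :: "nat \<Rightarrow> (nat list \<Rightarrow> bool) \<Rightarrow> bool" where
  "computable_rel k P \<longleftrightarrow>
     (\<exists>g. recfn k g \<and> (\<forall>xs. length xs = k \<longrightarrow> (P xs \<longleftrightarrow> g xs = 0)))"

primrec Sigma_rel :: "nat \<Rightarrow> nat \<Rightarrow> (nat list \<Rightarrow> bool) \<Rightarrow> bool" where
  "Sigma_rel 0 k P = computable_rel k P"
| "Sigma_rel (Suc n) k P =
     (\<exists>Q. Sigma_rel n (Suc k) (\<lambda>xs. \<not> Q xs) \<and>
          (\<forall>xs. length xs = k \<longrightarrow> (P xs \<longleftrightarrow> (\<exists>y. Q (y # xs)))))"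

definition Pi_rel :: "nat \<Rightarrow> nat \<Rightarrow> (nat list \<Rightarrow> bool) \<Rightarrow> bool" where
  "Pi_rel n k P \<longleftrightarrow> Sigma_rel n k (\<lambda>xs. \<not> P xs)"

definition as_rel2 :: "(nat \<times> nat) set \<Rightarrow> nat list \<Rightarrow> bool" where
  "as_rel2 R = (\<lambda>xs. (xs ! 0, xs ! 1) \<in> R)"

definition Sigma_binrel :: "nat \<Rightarrow> (nat \<times> nat) set \<Rightarrow> bool" where
  "Sigma_binrel n R \<longleftrightarrow> Sigma_rel n 2 (as_rel2 R)"

definition Pi_binrel :: "nat \<Rightarrow> (nat \<times> nat) set \<Rightarrow> bool" where
  "Pi_binrel n R \<longleftrightarrow> Pi_rel n 2 (as_rel2 R)"

definition universal_Sigma_eqrel :: "nat \<Rightarrow> (nat \<times> nat) set \<Rightarrow> bool" where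
  "universal_Sigma_eqrel n E \<longleftrightarrow>
     equiv UNIV E \<and> Sigma_binrel n E \<and>
     (\<forall>F. equiv UNIV F \<and> Sigma_binrel n F \<longrightarrow>
        (\<exists>f. computable_fun f \<and> (\<forall>x y. (x, y) \<in> F \<longleftrightarrow> (f x, f y) \<in> E)))"

definition simple_graph :: "(nat \<times> nat) set \<Rightarrow> bool" where
  "simple_graph G \<longleftrightarrow> sym G \<and> irrefl G"

definition paths_bounded :: "(nat \<times> nat) set \<Rightarrow> nat \<Rightarrow> bool" where
  "paths_bounded G k \<longleftrightarrow> (\<forall>x y. (x, y) \<in> G\<^sup>* \<longrightarrow> (\<exists>m\<le>k. (x, y) \<in> G ^^ m))"

definition graph_diameter :: "(nat \<times> nat) set \<Rightarrow> nat \<Rightarrow> bool" where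
  "graph_diameter G k \<longleftrightarrow> paths_bounded G k \<and> (\<forall>j<k. \<not> paths_bounded G j)"

definition Pi_graphable_diam :: "nat \<Rightarrow> (nat \<times> nat) set \<Rightarrow> nat \<Rightarrow> bool" where
  "Pi_graphable_diam m E k \<longleftrightarrow>
     (\<exists>G. simple_graph G \<and> Pi_binrel m G \<and> G\<^sup>* = E \<and> graph_diameter G k)"

end

theory Submission
  imports Defs "HOL-Library.Nat_Bijection" "HOL-Library.Product_Lexorder"
begin

(* Write n = m + 1.  Evaluation of codes of recursive functions is Sigma^0_1, being witnessed by
   finite traces, so alternating quantifiers over it gives a Pi^0_m matrix whose existential
   projection univ_Sigma m e is, as e varies, every Sigma^0_(m+1) relation.  The graph has a vertex
   (e, x) for every point x and a vertex (e, w) for every walk w of index e, i.e. every finite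
   sequence of pairs, each with a witness that it or its converse lies in the e-th relation; a walk
   is adjacent to its points and to the walks sharing a point with it, which is a Pi^0_m condition.
   If the e-th relation is an equivalence relation F, every point met along a path from (e, x) is
   F-related to x, so x |-> (e, x) reduces F to connectedness.  Two connected vertices of index e are
   both adjacent (or equal) to the vertex of one walk through a point of each, hence at distance at
   most 2, and connectedness is Sigma^0_(m+1).  A separate path 0 - 1 - 2 - 3 makes the diameter
   exactly 3. *)

section \<open>Recursive functions and computable relations\<close>

text \<open>recfn n g constrains g on all lists; recursive n f only asks f to agree with such a g on
  argument lists of length n.\<close>

definition recursive :: "nat \<Rightarrow> (nat list \<Rightarrow> nat) \<Rightarrow> bool" where
  "recursive n f \<longleftrightarrow> (\<exists>g. recfn n g \<and> (\<forall>xs. length xs = n \<longrightarrow> g xs = f xs))"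

lemma recursive_cong:
  "recursive n f \<Longrightarrow> (\<And>xs. length xs = n \<Longrightarrow> f xs = g xs) \<Longrightarrow> recursive n g"
  unfolding recursive_def by metis

lemma recursive_zero: "recursive n (\<lambda>_. 0)"
  unfolding recursive_def using recfn.zero by blast

lemma recursive_proj: "i < n \<Longrightarrow> recursive n (\<lambda>xs. xs ! i)"
  unfolding recursive_def using recfn.proj by blast

lemma recursive_hd: "recursive (Suc k) hd"
  by (rule recursive_cong[OF recursive_proj[of 0]]) (auto simp: length_Suc_conv)

lemma recursive_succ: "recursive 1 (\<lambda>xs. Suc (xs ! 0))"
  unfolding recursive_def
  by (intro exI[of _ "\<lambda>xs. Suc (hd xs)"] conjI recfn.succ) (auto simp: length_Suc_conv)

lemma recfn_list_choice:
  assumes "\<forall>g\<in>set gs. recursive n g"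
  shows "\<exists>gs'. length gs' = length gs \<and> (\<forall>g\<in>set gs'. recfn n g) \<and>
     (\<forall>xs. length xs = n \<longrightarrow> map (\<lambda>g. g xs) gs' = map (\<lambda>g. g xs) gs)"
  using assms
proof (induction gs)
  case (Cons g gs)
  then obtain gs' where "length gs' = length gs" "\<forall>g\<in>set gs'. recfn n g"
     "\<forall>xs. length xs = n \<longrightarrow> map (\<lambda>g. g xs) gs' = map (\<lambda>g. g xs) gs" by auto
  moreover obtain g' where "recfn n g'" "\<forall>xs. length xs = n \<longrightarrow> g' xs = g xs"
    using Cons.prems unfolding recursive_def by auto
  ultimately show ?case by (intro exI[of _ "g' # gs'"]) auto
qed simp

lemma recursive_comp:
  assumes "recursive m f" "length gs = m" "\<forall>g\<in>set gs. recursive n g"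
  shows "recursive n (\<lambda>xs. f (map (\<lambda>g. g xs) gs))"
proof -
  obtain f' where f': "recfn m f'" "\<forall>xs. length xs = m \<longrightarrow> f' xs = f xs"
    using assms(1) unfolding recursive_def by auto
  obtain gs' where gs': "length gs' = length gs" "\<forall>g\<in>set gs'. recfn n g"
     "\<forall>xs. length xs = n \<longrightarrow> map (\<lambda>g. g xs) gs' = map (\<lambda>g. g xs) gs"
    using recfn_list_choice[OF assms(3)] by auto
  have "recfn n (\<lambda>xs. f' (map (\<lambda>g. g xs) gs'))"
    using recfn.comp[OF f'(1)] gs' assms(2) by auto
  then show ?thesis
    unfolding recursive_def using gs' f' assms(2) by (intro exI) auto
qed

lemma recursive_prim:
  assumes "recursive n g" "recursive (n + 2) h"
  shows "recursive (Suc n) (\<lambda>xs. rec_nat (g (tl xs)) (\<lambda>k r. h (k # r # tl xs)) (hd xs))"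
proof -
  obtain g' where g': "recfn n g'" "\<forall>xs. length xs = n \<longrightarrow> g' xs = g xs"
    using assms(1) unfolding recursive_def by auto
  obtain h' where h': "recfn (n + 2) h'" "\<forall>xs. length xs = n + 2 \<longrightarrow> h' xs = h xs"
    using assms(2) unfolding recursive_def by auto
  have "rec_nat (g' (tl xs)) (\<lambda>k r. h' (k # r # tl xs)) j =
      rec_nat (g (tl xs)) (\<lambda>k r. h (k # r # tl xs)) j" if "length xs = Suc n" for xs j
    using that g'(2) h'(2) by (induction j) simp_all
  then show ?thesis
    unfolding recursive_def using recfn.prim[OF g'(1) h'(1)] by blast
qed

lemma recursive_mu:
  assumes "recursive (Suc n) g" "\<forall>xs. length xs = n \<longrightarrow> (\<exists>y. g (y # xs) = 0)"
  shows "recursive n (\<lambda>xs. LEAST y. g (y # xs) = 0)"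
proof -
  obtain g' where g': "recfn (Suc n) g'" "\<forall>xs. length xs = Suc n \<longrightarrow> g' xs = g xs"
    using assms(1) unfolding recursive_def by auto
  then have "recfn n (\<lambda>xs. LEAST y. g' (y # xs) = 0)"
    using assms(2) by (intro recfn.mu) auto
  then show ?thesis
    unfolding recursive_def using g'(2) by (intro exI[of _ "\<lambda>xs. LEAST y. g' (y # xs) = 0"]) auto
qed

lemma recursive_compose1:
  "recursive 1 (\<lambda>xs. F (xs ! 0)) \<Longrightarrow> recursive n g \<Longrightarrow> recursive n (\<lambda>xs. F (g xs))"
  using recursive_comp[of 1 "\<lambda>xs. F (xs ! 0)" "[g]" n] by simp

lemma recursive_compose2:
  "recursive 2 (\<lambda>xs. F (xs ! 0) (xs ! 1)) \<Longrightarrow> recursive n g \<Longrightarrow> recursive n h \<Longrightarrow>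
   recursive n (\<lambda>xs. F (g xs) (h xs))"
  using recursive_comp[of 2 "\<lambda>xs. F (xs ! 0) (xs ! 1)" "[g, h]" n] by simp

lemma recursive_Suc: "recursive n g \<Longrightarrow> recursive n (\<lambda>xs. Suc (g xs))"
  using recursive_compose1[OF recursive_succ] .

lemma recursive_const: "recursive n (\<lambda>_. c)"
  by (induction c) (auto intro: recursive_zero recursive_Suc[of n "\<lambda>_. _", simplified])

lemma recursive_prim1:
  assumes "recursive 2 (\<lambda>xs. h (xs ! 0) (xs ! 1))"
  shows "recursive 1 (\<lambda>xs. rec_nat c h (xs ! 0))"
proof -
  have "recursive (0 + 2) (\<lambda>ys. h (ys ! 0) (ys ! 1))"
    using assms by (simp add: numeral_2_eq_2)
  from recursive_prim[OF recursive_const this]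
  have "recursive 1 (\<lambda>xs. rec_nat c h (hd xs))"
    by simp
  then show ?thesis
    by (rule recursive_cong) (auto simp: length_Suc_conv)
qed

lemma recursive_prim2:
  assumes "recursive 1 (\<lambda>xs. g (xs ! 0))" "recursive 3 (\<lambda>xs. h (xs ! 0) (xs ! 1) (xs ! 2))"
  shows "recursive 2 (\<lambda>xs. rec_nat (g (xs ! 1)) (\<lambda>k r. h k r (xs ! 1)) (xs ! 0))"
proof -
  have "recursive (1 + 2) (\<lambda>ys. h (ys ! 0) (ys ! 1) (ys ! 2))"
    using assms(2) by (simp add: numeral_3_eq_3)
  from recursive_prim[OF assms(1) this]
  have "recursive 2 (\<lambda>xs. rec_nat (g (tl xs ! 0)) (\<lambda>k r. h k r (tl xs ! 0)) (hd xs))"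
    by (simp add: numeral_2_eq_2)
  then show ?thesis
    by (rule recursive_cong) (auto simp: length_Suc_conv numeral_2_eq_2)
qed

lemma rec_nat_add: "rec_nat b (\<lambda>k r. Suc r) a = a + b"
  by (induction a) simp_all

lemma rec_nat_mult: "rec_nat 0 (\<lambda>k r. r + b) a = a * b"
  by (induction a) simp_all

lemma rec_nat_pred: "rec_nat 0 (\<lambda>k r. k) a = a - 1"
  by (cases a) simp_all

lemma rec_nat_diff: "rec_nat b (\<lambda>k r. r - 1) a = b - a"
  by (induction a) simp_all

lemma recursive_add: "recursive n f \<Longrightarrow> recursive n g \<Longrightarrow> recursive n (\<lambda>xs. f xs + g xs)"
  using recursive_compose2[OF recursive_prim2[of "\<lambda>y. y" "\<lambda>k r y. Suc r"]]
  by (simp add: rec_nat_add recursive_proj recursive_Suc)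

lemma recursive_mult: "recursive n f \<Longrightarrow> recursive n g \<Longrightarrow> recursive n (\<lambda>xs. f xs * g xs)"
  using recursive_compose2[OF recursive_prim2[of "\<lambda>_. 0" "\<lambda>k r y. r + y"]]
  by (simp add: rec_nat_mult recursive_const recursive_add recursive_proj)

lemma recursive_pred: "recursive n f \<Longrightarrow> recursive n (\<lambda>xs. f xs - 1)"
  using recursive_compose1[OF recursive_prim1[where c = 0 and h = "\<lambda>k r. k", OF recursive_proj]]
  by (simp add: rec_nat_pred)

lemma recursive_diff: "recursive n f \<Longrightarrow> recursive n g \<Longrightarrow> recursive n (\<lambda>xs. f xs - g xs)"
  using recursive_compose2[OF recursive_prim2[of "\<lambda>y. y" "\<lambda>k r y. r - 1"], of n g f]
    recursive_pred[OF recursive_proj[of 1 3]]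
  by (simp add: rec_nat_diff[simplified] recursive_proj)

lemma recursive_shift:
  assumes "recursive (Suc m) f" "recursive (m + j) b"
  shows "recursive (m + j) (\<lambda>ys. f (b ys # drop j ys))"
proof -
  let ?gs = "b # map (\<lambda>i ys. ys ! (i + j)) [0..<m]"
  have "recursive (m + j) (\<lambda>ys. f (map (\<lambda>g. g ys) ?gs))"
    using assms by (intro recursive_comp) (auto intro: recursive_proj)
  then show ?thesis
  proof (rule recursive_cong)
    fix ys :: "nat list" assume "length ys = m + j"
    then have "map (\<lambda>g. g ys) ?gs = b ys # drop j ys"
      by (auto intro!: nth_equalityI simp: add.commute)
    then show "f (map (\<lambda>g. g ys) ?gs) = f (b ys # drop j ys)" by simp
  qed
qed

lemma map_nth_Suc_eq_tl: "length ys = Suc k \<Longrightarrow> map (\<lambda>f. f ys) (map (\<lambda>i ys. ys ! Suc i) [0..<k]) = tl ys"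
  by (auto intro!: nth_equalityI simp: nth_tl)

lemma recursive_tl: "recursive k f \<Longrightarrow> recursive (Suc k) (\<lambda>ys. f (tl ys))"
proof -
  assume "recursive k f"
  then have "recursive (Suc k) (\<lambda>ys. f (map (\<lambda>g. g ys) (map (\<lambda>i ys. ys ! Suc i) [0..<k])))"
    by (intro recursive_comp) (auto intro: recursive_proj)
  then show ?thesis
    by (rule recursive_cong) (simp add: map_nth_Suc_eq_tl del: map_map)
qed

lemma computable_rel_iff:
  "computable_rel k P \<longleftrightarrow> (\<exists>g. recursive k g \<and> (\<forall>xs. length xs = k \<longrightarrow> (P xs \<longleftrightarrow> g xs = 0)))"
  unfolding computable_rel_def recursive_def by metis

lemma computable_relI:
  "recursive k g \<Longrightarrow> (\<And>xs. length xs = k \<Longrightarrow> P xs \<longleftrightarrow> g xs = 0) \<Longrightarrow> computable_rel k P"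
  unfolding computable_rel_iff by blast

lemma computable_rel_cong:
  "computable_rel k P \<Longrightarrow> (\<And>xs. length xs = k \<Longrightarrow> P xs \<longleftrightarrow> Q xs) \<Longrightarrow> computable_rel k Q"
  unfolding computable_rel_iff by metis

lemma computable_rel_eq: "recursive k f \<Longrightarrow> recursive k g \<Longrightarrow> computable_rel k (\<lambda>xs. f xs = g xs)"
  by (rule computable_relI[of k "\<lambda>xs. (f xs - g xs) + (g xs - f xs)"])
    (auto intro: recursive_add recursive_diff)

lemma computable_rel_le: "recursive k f \<Longrightarrow> recursive k g \<Longrightarrow> computable_rel k (\<lambda>xs. f xs \<le> g xs)"
  by (rule computable_relI[of k "\<lambda>xs. f xs - g xs"]) (auto intro: recursive_diff)

lemma computable_rel_less: "recursive k f \<Longrightarrow> recursive k g \<Longrightarrow> computable_rel k (\<lambda>xs. f xs < g xs)"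
  by (rule computable_relI[of k "\<lambda>xs. Suc (f xs) - g xs"]) (auto intro: recursive_Suc recursive_diff)

lemma computable_rel_conj:
  assumes "computable_rel k P" "computable_rel k Q"
  shows "computable_rel k (\<lambda>xs. P xs \<and> Q xs)"
proof -
  obtain g h where "recursive k g" "\<forall>xs. length xs = k \<longrightarrow> (P xs \<longleftrightarrow> g xs = 0)"
    "recursive k h" "\<forall>xs. length xs = k \<longrightarrow> (Q xs \<longleftrightarrow> h xs = 0)"
    using assms unfolding computable_rel_iff by auto
  then show ?thesis by (intro computable_relI[of k "\<lambda>xs. g xs + h xs"] recursive_add) auto
qed

lemma computable_rel_disj:
  assumes "computable_rel k P" "computable_rel k Q"
  shows "computable_rel k (\<lambda>xs. P xs \<or> Q xs)"
proof -
  obtain g h where "recursive k g" "\<forall>xs. length xs = k \<longrightarrow> (P xs \<longleftrightarrow> g xs = 0)"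
    "recursive k h" "\<forall>xs. length xs = k \<longrightarrow> (Q xs \<longleftrightarrow> h xs = 0)"
    using assms unfolding computable_rel_iff by auto
  then show ?thesis by (intro computable_relI[of k "\<lambda>xs. g xs * h xs"] recursive_mult) auto
qed

lemma computable_rel_neg: "computable_rel k P \<Longrightarrow> computable_rel k (\<lambda>xs. \<not> P xs)"
proof -
  assume "computable_rel k P"
  then obtain g where "recursive k g" "\<forall>xs. length xs = k \<longrightarrow> (P xs \<longleftrightarrow> g xs = 0)"
    unfolding computable_rel_iff by auto
  then show ?thesis
    by (intro computable_relI[of k "\<lambda>xs. 1 - g xs"] recursive_diff recursive_const) auto
qed

lemma computable_rel_const: "computable_rel k (\<lambda>_. b)"
  by (rule computable_relI[of k "\<lambda>_. if b then 0 else 1"]) (simp_all add: recursive_const)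

lemma computable_rel_tl: "computable_rel k P \<Longrightarrow> computable_rel (Suc k) (\<lambda>ys. P (tl ys))"
proof -
  assume "computable_rel k P"
  then obtain g where "recursive k g" "\<forall>xs. length xs = k \<longrightarrow> (P xs \<longleftrightarrow> g xs = 0)"
    unfolding computable_rel_iff by blast
  then show ?thesis by (intro computable_relI[OF recursive_tl]) auto
qed

lemma computable_rel_comp:
  assumes "computable_rel m P" "length fs = m" "\<forall>f\<in>set fs. recursive k f"
  shows "computable_rel k (\<lambda>xs. P (map (\<lambda>f. f xs) fs))"
proof -
  obtain c where "recursive m c" "\<forall>xs. length xs = m \<longrightarrow> (P xs \<longleftrightarrow> c xs = 0)"
    using assms(1) unfolding computable_rel_iff by auto
  then show ?thesis
    using assms(2) by (intro computable_relI[OF recursive_comp[OF _ assms(2,3)]]) auto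
qed

lemma computable_rel_compose1:
  "computable_rel 1 (\<lambda>xs. R (xs ! 0)) \<Longrightarrow> recursive k f \<Longrightarrow> computable_rel k (\<lambda>xs. R (f xs))"
  using computable_rel_comp[of 1 "\<lambda>xs. R (xs ! 0)" "[f]" k] by simp

lemma computable_rel_compose2:
  "computable_rel 2 (\<lambda>xs. R (xs ! 0) (xs ! 1)) \<Longrightarrow> recursive k f \<Longrightarrow> recursive k g \<Longrightarrow>
   computable_rel k (\<lambda>xs. R (f xs) (g xs))"
  using computable_rel_comp[of 2 "\<lambda>xs. R (xs ! 0) (xs ! 1)" "[f, g]" k] by simp

lemma computable_rel_compose4:
  "computable_rel 4 (\<lambda>xs. R (xs ! 0) (xs ! 1) (xs ! 2) (xs ! 3)) \<Longrightarrow>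
   recursive k f \<Longrightarrow> recursive k g \<Longrightarrow> recursive k h \<Longrightarrow> recursive k i \<Longrightarrow>
   computable_rel k (\<lambda>xs. R (f xs) (g xs) (h xs) (i xs))"
  using computable_rel_comp[of 4 "\<lambda>xs. R (xs ! 0) (xs ! 1) (xs ! 2) (xs ! 3)" "[f, g, h, i]" k]
  by (simp add: numeral_eq_Suc)

lemma rec_nat_mult_eq_0_iff: "rec_nat (Suc 0) (\<lambda>i r. r * c i) m = 0 \<longleftrightarrow> (\<exists>i<m. c i = (0::nat))"
  by (induction m) (auto simp: less_Suc_eq)

lemma computable_rel_bounded_ex:
  assumes "computable_rel (Suc k) P" "recursive k b"
  shows "computable_rel k (\<lambda>xs. \<exists>i<b xs. P (i # xs))"
proof -
  obtain c where c: "recursive (Suc k) c" "\<forall>xs. length xs = Suc k \<longrightarrow> (P xs \<longleftrightarrow> c xs = 0)"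
    using assms(1) unfolding computable_rel_iff by auto
  have "recursive (k + 2) (\<lambda>ys. ys ! 1 * c (ys ! 0 # drop 2 ys))"
    by (intro recursive_mult recursive_proj recursive_shift c(1)) auto
  from recursive_prim[OF recursive_const this]
  have "recursive (Suc k) (\<lambda>xs. rec_nat 1 (\<lambda>i r. r * c (i # tl xs)) (hd xs))"
    by simp
  from recursive_shift[OF this, of 0] assms(2)
  have "recursive k (\<lambda>xs. rec_nat 1 (\<lambda>i r. r * c (i # xs)) (b xs))"
    by simp
  then show ?thesis
    by (rule computable_relI) (use c in \<open>simp add: rec_nat_mult_eq_0_iff\<close>)
qed

lemma computable_rel_bex:
  assumes "computable_rel (Suc k) P" "recursive k b"
    and "\<And>xs. length xs = k \<Longrightarrow> Q xs \<longleftrightarrow> (\<exists>i<b xs. P (i # xs))"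
  shows "computable_rel k Q"
  using computable_rel_cong[OF computable_rel_bounded_ex[OF assms(1,2)]] assms(3) by blast

lemma computable_rel_ball:
  assumes "computable_rel (Suc k) P" "recursive k b"
    and "\<And>xs. length xs = k \<Longrightarrow> Q xs \<longleftrightarrow> (\<forall>i<b xs. P (i # xs))"
  shows "computable_rel k Q"
  using computable_rel_neg[OF computable_rel_bounded_ex[OF computable_rel_neg[OF assms(1)] assms(2)]]
  by (rule computable_rel_cong) (simp add: assms(3))

lemma recursive_Least:
  assumes "computable_rel (Suc k) P" "\<forall>xs. length xs = k \<longrightarrow> (\<exists>y. P (y # xs))"
    and "\<And>xs. length xs = k \<Longrightarrow> (LEAST y. P (y # xs)) = f xs"
  shows "recursive k f"
proof -
  obtain c where c: "recursive (Suc k) c" "\<forall>xs. length xs = Suc k \<longrightarrow> (P xs \<longleftrightarrow> c xs = 0)"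
    using assms(1) unfolding computable_rel_iff by auto
  then have "recursive k (\<lambda>xs. LEAST y. c (y # xs) = 0)"
    using assms(2) by (intro recursive_mu) auto
  then show ?thesis
    by (rule recursive_cong) (use c assms(3) in auto)
qed

section \<open>Coding pairs, lists and triples by numbers\<close>

definition npair :: "nat \<Rightarrow> nat \<Rightarrow> nat" where "npair a b = prod_encode (a, b)"
definition nfst :: "nat \<Rightarrow> nat" where "nfst p = fst (prod_decode p)"
definition nsnd :: "nat \<Rightarrow> nat" where "nsnd p = snd (prod_decode p)"

lemma nfst_npair [simp]: "nfst (npair a b) = a" by (simp add: nfst_def npair_def)
lemma nsnd_npair [simp]: "nsnd (npair a b) = b" by (simp add: nsnd_def npair_def)
lemma npair_nfst_nsnd [simp]: "npair (nfst p) (nsnd p) = p" by (simp add: nfst_def nsnd_def npair_def)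
lemma npair_eq_iff [simp]: "npair a b = npair c d \<longleftrightarrow> a = c \<and> b = d" by (simp add: npair_def)

lemma le_triangle: "n \<le> triangle n" by (induction n) auto

lemma add_le_npair: "a + b \<le> npair a b"
  unfolding npair_def prod_encode_def using le_triangle[of "a + b"] by simp

lemma nfst_le: "nfst p \<le> p" using add_le_npair[of "nfst p" "nsnd p"] by simp
lemma nsnd_le: "nsnd p \<le> p" using add_le_npair[of "nfst p" "nsnd p"] by simp

lemma nsnd_less: "nfst p \<noteq> 0 \<Longrightarrow> nsnd p < p"
  using add_le_npair[of "nfst p" "nsnd p"] by simp

lemma recursive_npair: "recursive k f \<Longrightarrow> recursive k g \<Longrightarrow> recursive k (\<lambda>xs. npair (f xs) (g xs))"
proof -
  have "triangle n = rec_nat 0 (\<lambda>k r. r + Suc k) n" for n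
    by (induction n) simp_all
  then have "recursive 1 (\<lambda>xs. triangle (xs ! 0))"
    using recursive_prim1[of "\<lambda>k r. r + Suc k"]
    by (simp add: recursive_add recursive_Suc recursive_proj)
  note triangle = this
  have "recursive 2 (\<lambda>xs. triangle (xs ! 0 + xs ! 1) + xs ! 0)"
    by (intro recursive_add recursive_compose1[where F = triangle, OF triangle] recursive_proj) auto
  then have "recursive 2 (\<lambda>xs. npair (xs ! 0) (xs ! 1))"
    by (simp add: npair_def prod_encode_def)
  then show "recursive k f \<Longrightarrow> recursive k g \<Longrightarrow> recursive k (\<lambda>xs. npair (f xs) (g xs))"
    by (rule recursive_compose2)
qed

text \<open>The components of p are found by bounded search below p, since they do not exceed p.\<close>

lemma recursive_nfst: "recursive k f \<Longrightarrow> recursive k (\<lambda>xs. nfst (f xs))"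
proof -
  have search: "computable_rel (Suc 1) (\<lambda>ys. \<exists>b<Suc (ys ! 1). npair (ys ! 0) b = ys ! 1)"
    by (rule computable_rel_bex[of "Suc 1" "\<lambda>zs. npair (zs ! 1) (zs ! 0) = zs ! 2" "\<lambda>ys. Suc (ys ! 1)"])
      (intro computable_rel_eq recursive_npair recursive_Suc recursive_proj | simp add: nth_Cons')+
  have least: "(LEAST y. \<exists>b<Suc p. npair y b = p) = nfst p" for p
    by (rule Least_equality) (use nsnd_le[of p] in \<open>auto intro!: exI[of _ "nsnd p"]\<close>)
  have "\<exists>y b. b < Suc p \<and> npair y b = p" for p
    using nsnd_le[of p] by (intro exI[of _ "nfst p"] exI[of _ "nsnd p"]) simp
  then have "recursive 1 (\<lambda>xs. nfst (xs ! 0))"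
    by (intro recursive_Least[OF search]) (simp_all add: least)
  then show "recursive k f \<Longrightarrow> recursive k (\<lambda>xs. nfst (f xs))"
    by (rule recursive_compose1)
qed

lemma recursive_nsnd: "recursive k f \<Longrightarrow> recursive k (\<lambda>xs. nsnd (f xs))"
proof -
  have search: "computable_rel (Suc 1) (\<lambda>ys. \<exists>a<Suc (ys ! 1). npair a (ys ! 0) = ys ! 1)"
    by (rule computable_rel_bex[of "Suc 1" "\<lambda>zs. npair (zs ! 0) (zs ! 1) = zs ! 2" "\<lambda>ys. Suc (ys ! 1)"])
      (intro computable_rel_eq recursive_npair recursive_Suc recursive_proj | simp add: nth_Cons')+
  have least: "(LEAST y. \<exists>a<Suc p. npair a y = p) = nsnd p" for p
    by (rule Least_equality) (use nfst_le[of p] in \<open>auto intro!: exI[of _ "nfst p"]\<close>)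
  have "\<exists>y a. a < Suc p \<and> npair a y = p" for p
    using nfst_le[of p] by (intro exI[of _ "nsnd p"] exI[of _ "nfst p"]) simp
  then have "recursive 1 (\<lambda>xs. nsnd (xs ! 0))"
    by (intro recursive_Least[OF search]) (simp_all add: least)
  then show "recursive k f \<Longrightarrow> recursive k (\<lambda>xs. nsnd (f xs))"
    by (rule recursive_compose1)
qed

text \<open>Under list_encode, 0 codes the empty list and a nonzero c codes the list with head
  nfst (c - 1) and tail coded by nsnd (c - 1).\<close>

definition ncons :: "nat \<Rightarrow> nat \<Rightarrow> nat" where "ncons x c = Suc (npair x c)"
definition nhd :: "nat \<Rightarrow> nat" where "nhd c = nfst (c - 1)"
definition ntl :: "nat \<Rightarrow> nat" where "ntl c = nsnd (c - 1)"
definition nnth :: "nat \<Rightarrow> nat \<Rightarrow> nat" where "nnth c i = nhd ((ntl ^^ i) c)"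
definition nlength :: "nat \<Rightarrow> nat" where "nlength c = (LEAST i. (ntl ^^ i) c = 0)"

lemma list_encode_Cons: "list_encode (x # xs) = ncons x (list_encode xs)"
  by (simp add: ncons_def npair_def)

lemma nhd_ncons [simp]: "nhd (ncons x c) = x" by (simp add: nhd_def ncons_def)
lemma ntl_ncons [simp]: "ntl (ncons x c) = c" by (simp add: ntl_def ncons_def)
lemma ncons_neq_0 [simp]: "ncons x c \<noteq> 0" by (simp add: ncons_def)

lemma ntl_list_encode: "ntl (list_encode xs) = list_encode (tl xs)"
proof (cases xs)
  case Nil
  then show ?thesis by (simp add: ntl_def nsnd_def prod_decode_def prod_decode_aux.simps)
qed (simp del: list_encode.simps add: list_encode_Cons)

lemma funpow_ntl_list_encode: "(ntl ^^ i) (list_encode xs) = list_encode (drop i xs)"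
  by (induction i arbitrary: xs) (simp_all add: ntl_list_encode drop_Suc funpow_swap1 drop_tl)

lemma nnth_list_encode: "i < length xs \<Longrightarrow> nnth (list_encode xs) i = xs ! i"
  unfolding nnth_def funpow_ntl_list_encode
  by (simp del: list_encode.simps add: Cons_nth_drop_Suc[symmetric] list_encode_Cons)

lemma nlength_list_encode: "nlength (list_encode xs) = length xs"
proof -
  have "list_encode xs = 0 \<longleftrightarrow> xs = []" for xs
    using list_encode_eq[of xs "[]"] by simp
  then show ?thesis
    unfolding nlength_def funpow_ntl_list_encode by (intro Least_equality) auto
qed

lemma nlength_eq: "nlength c = length (list_decode c)"
  using nlength_list_encode[of "list_decode c"] by simp

lemma nnth_eq: "i < nlength c \<Longrightarrow> nnth c i = list_decode c ! i"
  using nnth_list_encode[of i "list_decode c"] by (simp add: nlength_eq)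

lemma list_encode_greater: "x \<in> set xs \<Longrightarrow> x < list_encode xs"
proof (induction xs)
  case (Cons a xs)
  have "a \<le> npair a (list_encode xs)" "list_encode xs \<le> npair a (list_encode xs)"
    using add_le_npair[of a "list_encode xs"] by auto
  with Cons show ?case by (auto simp del: list_encode.simps simp: list_encode_Cons ncons_def)
qed simp

lemma nnth_less: "i < nlength c \<Longrightarrow> nnth c i < c"
  using list_encode_greater[of "list_decode c ! i" "list_decode c"] by (simp add: nnth_eq nlength_eq)

lemma ex_less_nlength_list_encode:
  "(\<exists>j<nlength (list_encode xs). P (nnth (list_encode xs) j)) \<longleftrightarrow> (\<exists>x\<in>set xs. P x)"
  unfolding nlength_list_encode by (metis in_set_conv_nth nnth_list_encode)

lemma all_less_nlength_list_encode:
  "(\<forall>j<nlength (list_encode xs). P (nnth (list_encode xs) j)) \<longleftrightarrow> (\<forall>x\<in>set xs. P x)"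
  using ex_less_nlength_list_encode[of xs "\<lambda>x. \<not> P x"] by blast

lemma recursive_ncons: "recursive k f \<Longrightarrow> recursive k g \<Longrightarrow> recursive k (\<lambda>xs. ncons (f xs) (g xs))"
  unfolding ncons_def by (intro recursive_Suc recursive_npair)

lemma recursive_nhd: "recursive k f \<Longrightarrow> recursive k (\<lambda>xs. nhd (f xs))"
  unfolding nhd_def by (intro recursive_nfst recursive_pred)

lemma recursive_ntl: "recursive k f \<Longrightarrow> recursive k (\<lambda>xs. ntl (f xs))"
  unfolding ntl_def by (intro recursive_nsnd recursive_pred)

lemma recursive_funpow_ntl:
  "recursive k f \<Longrightarrow> recursive k g \<Longrightarrow> recursive k (\<lambda>xs. (ntl ^^ f xs) (g xs))"
proof -
  have "(ntl ^^ a) b = rec_nat b (\<lambda>k r. ntl r) a" for a b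
    by (induction a) simp_all
  then have "recursive 2 (\<lambda>xs. (ntl ^^ (xs ! 0)) (xs ! 1))"
    using recursive_prim2[of "\<lambda>y. y" "\<lambda>k r y. ntl r"] by (simp add: recursive_ntl recursive_proj)
  then show "recursive k f \<Longrightarrow> recursive k g \<Longrightarrow> recursive k (\<lambda>xs. (ntl ^^ f xs) (g xs))"
    by (rule recursive_compose2)
qed

lemma recursive_nnth: "recursive k f \<Longrightarrow> recursive k g \<Longrightarrow> recursive k (\<lambda>xs. nnth (f xs) (g xs))"
  unfolding nnth_def by (intro recursive_nhd recursive_funpow_ntl)

lemma recursive_nlength: "recursive k f \<Longrightarrow> recursive k (\<lambda>xs. nlength (f xs))"
proof -
  have search: "computable_rel (Suc 1) (\<lambda>ys. (ntl ^^ (ys ! 0)) (ys ! 1) = 0)"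
    by (intro computable_rel_eq recursive_funpow_ntl recursive_proj recursive_const) simp_all
  have "(ntl ^^ length (list_decode c)) c = 0" for c
    using funpow_ntl_list_encode[of "length (list_decode c)" "list_decode c"] by simp
  then have "recursive 1 (\<lambda>xs. nlength (xs ! 0))"
    by (intro recursive_Least[OF search]) (auto simp: nlength_def)
  then show "recursive k f \<Longrightarrow> recursive k (\<lambda>xs. nlength (f xs))"
    by (rule recursive_compose1)
qed

definition ntriple :: "nat \<Rightarrow> nat \<Rightarrow> nat \<Rightarrow> nat" where "ntriple e x v = npair e (npair x v)"
definition nsnd3 :: "nat \<Rightarrow> nat" where "nsnd3 t = nfst (nsnd t)"
definition nthd3 :: "nat \<Rightarrow> nat" where "nthd3 t = nsnd (nsnd t)"

lemma ntriple_components [simp]: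
  "nfst (ntriple e x v) = e" "nsnd3 (ntriple e x v) = x" "nthd3 (ntriple e x v) = v"
  by (simp_all add: ntriple_def nsnd3_def nthd3_def)

lemma ntriple_nfst_nsnd3_nthd3 [simp]: "ntriple (nfst t) (nsnd3 t) (nthd3 t) = t"
  by (simp add: ntriple_def nsnd3_def nthd3_def)

lemma recursive_ntriple:
  "recursive k f \<Longrightarrow> recursive k g \<Longrightarrow> recursive k h \<Longrightarrow> recursive k (\<lambda>xs. ntriple (f xs) (g xs) (h xs))"
  unfolding ntriple_def by (intro recursive_npair)

lemma recursive_nsnd3: "recursive k f \<Longrightarrow> recursive k (\<lambda>xs. nsnd3 (f xs))"
  unfolding nsnd3_def by (intro recursive_nfst recursive_nsnd)

lemma recursive_nthd3: "recursive k f \<Longrightarrow> recursive k (\<lambda>xs. nthd3 (f xs))"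
  unfolding nthd3_def by (intro recursive_nsnd)

lemmas recursive_intros = recursive_proj recursive_const recursive_add recursive_mult recursive_diff
  recursive_Suc recursive_npair recursive_nfst recursive_nsnd recursive_ncons recursive_nhd
  recursive_ntl recursive_nnth recursive_nlength recursive_ntriple recursive_nsnd3 recursive_nthd3

lemmas computable_rel_intros = computable_rel_eq computable_rel_le computable_rel_less
  computable_rel_conj computable_rel_disj computable_rel_neg computable_rel_const

section \<open>Codes of recursive functions and their evaluation\<close>

text \<open>Code e describes a recursive function according to nfst e: 0 is zero, 1 successor,
  2 projection onto argument nsnd e, 3 composition of nfst (nsnd e) with the functions whose codes
  are listed in nsnd (nsnd e), 4 primitive recursion with base nfst (nsnd e) and step
  nsnd (nsnd e), and 5 minimisation of nsnd e.  Argument lists are passed as list codes.\<close>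

inductive eval_code :: "nat \<Rightarrow> nat \<Rightarrow> nat \<Rightarrow> bool" where
  zero: "nfst e = 0 \<Longrightarrow> eval_code e x 0"
| succ: "nfst e = 1 \<Longrightarrow> eval_code e x (Suc (nhd x))"
| proj: "nfst e = 2 \<Longrightarrow> eval_code e x (nnth x (nsnd e))"
| comp: "nfst e = 3 \<Longrightarrow> eval_code (nfst (nsnd e)) y v \<Longrightarrow> nlength y = nlength (nsnd (nsnd e)) \<Longrightarrow>
    \<forall>i<nlength (nsnd (nsnd e)). eval_code (nnth (nsnd (nsnd e)) i) x (nnth y i) \<Longrightarrow> eval_code e x v"
| prim_0: "nfst e = 4 \<Longrightarrow> x \<noteq> 0 \<Longrightarrow> nhd x = 0 \<Longrightarrow> eval_code (nfst (nsnd e)) (ntl x) v \<Longrightarrow>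
    eval_code e x v"
| prim_Suc: "nfst e = 4 \<Longrightarrow> x \<noteq> 0 \<Longrightarrow> nhd x \<noteq> 0 \<Longrightarrow> eval_code e (ncons (nhd x - 1) (ntl x)) r \<Longrightarrow>
    eval_code (nsnd (nsnd e)) (ncons (nhd x - 1) (ncons r (ntl x))) v \<Longrightarrow> eval_code e x v"
| mu: "nfst e = 5 \<Longrightarrow> eval_code (nsnd e) (ncons v x) 0 \<Longrightarrow>
    \<forall>z<v. \<exists>w. w \<noteq> 0 \<and> eval_code (nsnd e) (ncons z x) w \<Longrightarrow> eval_code e x v"

lemma eval_code_inv:
  assumes "eval_code e x v"
  shows "(nfst e = 0 \<and> v = 0) \<or> (nfst e = 1 \<and> v = Suc (nhd x)) \<or> (nfst e = 2 \<and> v = nnth x (nsnd e)) \<or>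
    (nfst e = 3 \<and> (\<exists>y. eval_code (nfst (nsnd e)) y v \<and> nlength y = nlength (nsnd (nsnd e)) \<and>
       (\<forall>i<nlength (nsnd (nsnd e)). eval_code (nnth (nsnd (nsnd e)) i) x (nnth y i)))) \<or>
    (nfst e = 4 \<and> x \<noteq> 0 \<and> ((nhd x = 0 \<and> eval_code (nfst (nsnd e)) (ntl x) v) \<or>
       (nhd x \<noteq> 0 \<and> (\<exists>r. eval_code e (ncons (nhd x - 1) (ntl x)) r \<and>
           eval_code (nsnd (nsnd e)) (ncons (nhd x - 1) (ncons r (ntl x))) v)))) \<or>
    (nfst e = 5 \<and> eval_code (nsnd e) (ncons v x) 0 \<and> (\<forall>z<v. \<exists>w. w \<noteq> 0 \<and> eval_code (nsnd e) (ncons z x) w))"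
  using assms by (cases rule: eval_code.cases) auto

definition code_computes :: "nat \<Rightarrow> nat \<Rightarrow> (nat list \<Rightarrow> nat) \<Rightarrow> bool" where
  "code_computes e n g \<longleftrightarrow> (\<forall>xs. length xs = n \<longrightarrow> (\<forall>v. eval_code e (list_encode xs) v \<longleftrightarrow> v = g xs))"

lemma eval_code_basic_iff:
  "nfst e = 0 \<Longrightarrow> eval_code e x v \<longleftrightarrow> v = 0"
  "nfst e = 1 \<Longrightarrow> eval_code e x v \<longleftrightarrow> v = Suc (nhd x)"
  "nfst e = 2 \<Longrightarrow> eval_code e x v \<longleftrightarrow> v = nnth x (nsnd e)"
  using eval_code_inv[of e x v] eval_code.zero[of e x] eval_code.succ[of e x] eval_code.proj[of e x]
  by auto

lemma code_computes_zero: "code_computes (npair 0 0) n (\<lambda>_. 0)"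
  unfolding code_computes_def by (simp add: eval_code_basic_iff)

lemma code_computes_succ: "code_computes (npair 1 0) 1 (\<lambda>xs. Suc (hd xs))"
  unfolding code_computes_def
  by (auto simp: eval_code_basic_iff length_Suc_conv list_encode_Cons simp del: list_encode.simps)

lemma code_computes_proj: "i < n \<Longrightarrow> code_computes (npair 2 i) n (\<lambda>xs. xs ! i)"
  unfolding code_computes_def by (simp add: eval_code_basic_iff nnth_list_encode)

lemma code_computes_comp:
  assumes f: "code_computes ef m f" and "length gs = m" and "length es = length gs"
    and gs: "\<forall>i<length gs. code_computes (es ! i) n (gs ! i)"
  shows "code_computes (npair 3 (npair ef (list_encode es))) n (\<lambda>xs. f (map (\<lambda>g. g xs) gs))"
  unfolding code_computes_def
proof (intro allI impI)
  fix xs :: "nat list" and v :: nat assume xs: "length xs = n"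
  let ?e = "npair 3 (npair ef (list_encode es))" and ?y = "list_encode (map (\<lambda>g. g xs) gs)"
  have args: "eval_code (es ! i) (list_encode xs) w \<longleftrightarrow> w = (gs ! i) xs" if "i < length gs" for i w
    using gs xs that unfolding code_computes_def by blast
  have fy: "eval_code ef ?y w \<longleftrightarrow> w = f (map (\<lambda>g. g xs) gs)" for w
    using f \<open>length gs = m\<close> unfolding code_computes_def by simp
  show "eval_code ?e (list_encode xs) v \<longleftrightarrow> v = f (map (\<lambda>g. g xs) gs)"
  proof
    assume "eval_code ?e (list_encode xs) v"
    from eval_code_inv[OF this] obtain y where y: "eval_code ef y v" "nlength y = length gs"
      "\<forall>i<length gs. eval_code (es ! i) (list_encode xs) (nnth y i)"
      using assms(3) by (auto simp: nlength_list_encode nnth_list_encode)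
    then have "list_decode y = map (\<lambda>g. g xs) gs"
      using args by (intro nth_equalityI) (auto simp: nlength_eq nnth_eq)
    then have "y = ?y"
      by (metis list_decode_inverse)
    with y(1) show "v = f (map (\<lambda>g. g xs) gs)"
      using fy by simp
  next
    assume v: "v = f (map (\<lambda>g. g xs) gs)"
    show "eval_code ?e (list_encode xs) v"
      by (rule eval_code.comp[where y = ?y])
        (use v fy args assms(3) in \<open>simp_all add: nlength_list_encode nnth_list_encode\<close>)
  qed
qed

lemma code_computes_prim:
  assumes g: "code_computes eg n g" and h: "code_computes eh (n + 2) h"
  shows "code_computes (npair 4 (npair eg eh)) (Suc n)
           (\<lambda>xs. rec_nat (g (tl xs)) (\<lambda>k r. h (k # r # tl xs)) (hd xs))"
proof -
  let ?e = "npair 4 (npair eg eh)"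
  have "eval_code ?e (ncons k (list_encode ys)) v \<longleftrightarrow> v = rec_nat (g ys) (\<lambda>k r. h (k # r # ys)) k"
    if ys: "length ys = n" for k ys v
  proof (induction k arbitrary: v)
    case 0
    have "eval_code eg (list_encode ys) v \<longleftrightarrow> v = g ys"
      using g ys unfolding code_computes_def by blast
    moreover note eval_code_inv[of ?e "ncons 0 (list_encode ys)" v]
    moreover have "eval_code eg (list_encode ys) v \<Longrightarrow> eval_code ?e (ncons 0 (list_encode ys)) v"
      by (rule eval_code.prim_0) simp_all
    ultimately show ?case by auto
  next
    case (Suc k)
    let ?r = "rec_nat (g ys) (\<lambda>k r. h (k # r # ys)) k"
    have step: "eval_code eh (ncons k (ncons r (list_encode ys))) v \<longleftrightarrow> v = h (k # r # ys)" for r v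
      using h[unfolded code_computes_def, rule_format, of "k # r # ys"] ys
      by (simp del: list_encode.simps add: list_encode_Cons)
    have "eval_code ?e (ncons k (list_encode ys)) ?r"
      using Suc.IH by simp
    then have "eval_code eh (ncons k (ncons ?r (list_encode ys))) v \<Longrightarrow>
        eval_code ?e (ncons (Suc k) (list_encode ys)) v" for v
      using eval_code.prim_Suc[of ?e "ncons (Suc k) (list_encode ys)" ?r v] by simp
    with Suc.IH step show ?case
      using eval_code_inv[of ?e "ncons (Suc k) (list_encode ys)" v] by auto
  qed
  then show ?thesis
    unfolding code_computes_def by (auto simp: length_Suc_conv list_encode_Cons simp del: list_encode.simps)
qed

lemma code_computes_mu:
  assumes g: "code_computes eg (Suc n) g" and total: "\<forall>xs. length xs = n \<longrightarrow> (\<exists>y. g (y # xs) = 0)"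
  shows "code_computes (npair 5 eg) n (\<lambda>xs. LEAST y. g (y # xs) = 0)"
  unfolding code_computes_def
proof (intro allI impI)
  fix xs :: "nat list" and v :: nat assume xs: "length xs = n"
  have eg: "eval_code eg (ncons y (list_encode xs)) w \<longleftrightarrow> w = g (y # xs)" for y w
    using g[unfolded code_computes_def, rule_format, of "y # xs"] xs
    by (simp del: list_encode.simps add: list_encode_Cons)
  have "eval_code (npair 5 eg) (list_encode xs) v \<longleftrightarrow> g (v # xs) = 0 \<and> (\<forall>z<v. g (z # xs) \<noteq> 0)"
    using eval_code_inv[of "npair 5 eg" "list_encode xs" v] eval_code.mu[of "npair 5 eg" v "list_encode xs"] eg
    by auto
  also have "\<dots> \<longleftrightarrow> v = (LEAST y. g (y # xs) = 0)"
    using total xs by (metis (mono_tags, lifting) LeastI Least_equality leI not_less_Least)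
  finally show "eval_code (npair 5 eg) (list_encode xs) v \<longleftrightarrow> v = (LEAST y. g (y # xs) = 0)" .
qed

lemma recfn_has_code: "recfn n g \<Longrightarrow> \<exists>e. code_computes e n g"
proof (induction rule: recfn.induct)
  case (comp m f gs n)
  obtain ef where ef: "code_computes ef m f"
    using comp.IH(1) by blast
  have "\<forall>i<length gs. \<exists>e. code_computes e n (gs ! i)"
    using comp.IH(2) by simp
  then obtain E where "\<forall>i<length gs. code_computes (E i) n (gs ! i)"
    unfolding choice_iff' by blast
  then have "code_computes (npair 3 (npair ef (list_encode (map E [0..<length gs])))) n
      (\<lambda>xs. f (map (\<lambda>g. g xs) gs))"
    by (intro code_computes_comp[OF ef comp.hyps(2)]) simp_all
  then show ?case by blast
next
  case (prim n g h)
  then show ?case using code_computes_prim by blast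
next
  case (mu n g)
  then show ?case using code_computes_mu by blast
qed (use code_computes_zero code_computes_succ code_computes_proj in blast)+

section \<open>Evaluation is witnessed by finite traces\<close>

text \<open>A trace is a set S of codes of triples (e, x, v) each of which follows, by one rule of
  eval_code, from triples in S.\<close>

definition justified :: "nat \<Rightarrow> nat \<Rightarrow> nat \<Rightarrow> nat set \<Rightarrow> bool" where
  "justified e x v S \<longleftrightarrow>
    (nfst e = 0 \<and> v = 0) \<or> (nfst e = 1 \<and> v = Suc (nhd x)) \<or> (nfst e = 2 \<and> v = nnth x (nsnd e)) \<or>
    (nfst e = 3 \<and> (\<exists>t\<in>S. nfst t = nfst (nsnd e) \<and> nthd3 t = v \<and> nlength (nsnd3 t) = nlength (nsnd (nsnd e)) \<and>
        (\<forall>i<nlength (nsnd (nsnd e)). ntriple (nnth (nsnd (nsnd e)) i) x (nnth (nsnd3 t) i) \<in> S))) \<or>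
    (nfst e = 4 \<and> x \<noteq> 0 \<and> ((nhd x = 0 \<and> ntriple (nfst (nsnd e)) (ntl x) v \<in> S) \<or>
       (nhd x \<noteq> 0 \<and> (\<exists>t\<in>S. nfst t = e \<and> nsnd3 t = ncons (nhd x - 1) (ntl x) \<and>
           ntriple (nsnd (nsnd e)) (ncons (nhd x - 1) (ncons (nthd3 t) (ntl x))) v \<in> S)))) \<or>
    (nfst e = 5 \<and> ntriple (nsnd e) (ncons v x) 0 \<in> S \<and>
       (\<forall>z<v. \<exists>t\<in>S. nfst t = nsnd e \<and> nsnd3 t = ncons z x \<and> nthd3 t \<noteq> 0))"

definition trace :: "nat set \<Rightarrow> bool" where
  "trace S \<longleftrightarrow> (\<forall>t\<in>S. justified (nfst t) (nsnd3 t) (nthd3 t) S)"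

lemma justified_mono: "justified e x v S \<Longrightarrow> S \<subseteq> S' \<Longrightarrow> justified e x v S'"
  unfolding justified_def by blast

lemma trace_Union: "(\<And>S. S \<in> F \<Longrightarrow> trace S) \<Longrightarrow> trace (\<Union>F)"
  unfolding trace_def by (meson UnionE Union_upper justified_mono)

lemma trace_insert:
  "trace S \<Longrightarrow> justified e x v (insert (ntriple e x v) S) \<Longrightarrow> trace (insert (ntriple e x v) S)"
  unfolding trace_def by (auto intro: justified_mono)

lemma trace_extend:
  assumes "finite T" and traces: "\<forall>t\<in>T. \<exists>S. finite S \<and> trace S \<and> t \<in> S"
    and "justified e x v (insert (ntriple e x v) T)"
  shows "\<exists>S. finite S \<and> trace S \<and> ntriple e x v \<in> S"
proof -
  obtain S where S: "\<forall>t\<in>T. finite (S t) \<and> trace (S t) \<and> t \<in> S t"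
    using traces by metis
  let ?U = "insert (ntriple e x v) (\<Union>(S ` T))"
  have "trace (\<Union>(S ` T))"
    using S by (intro trace_Union) auto
  moreover have "justified e x v ?U"
    by (rule justified_mono[OF assms(3)]) (use S in blast)
  ultimately have "trace ?U"
    by (rule trace_insert)
  then show ?thesis
    using S \<open>finite T\<close> by (intro exI[of _ ?U]) auto
qed

lemma eval_code_has_trace: "eval_code e x v \<Longrightarrow> \<exists>S. finite S \<and> trace S \<and> ntriple e x v \<in> S"
proof (induction rule: eval_code.induct)
  case (comp e y v x)
  let ?G = "nsnd (nsnd e)"
  show ?case
  proof (rule trace_extend)
    let ?T = "insert (ntriple (nfst (nsnd e)) y v) ((\<lambda>i. ntriple (nnth ?G i) x (nnth y i)) ` {..<nlength ?G})"
    show "finite ?T" by simp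
    show "\<forall>t\<in>?T. \<exists>S. finite S \<and> trace S \<and> t \<in> S"
      using comp.IH by auto
    show "justified e x v (insert (ntriple e x v) ?T)"
      unfolding justified_def using comp.hyps(1,3) by auto
  qed
next
  case (prim_0 e x v)
  then show ?case
    by (intro trace_extend[of "{ntriple (nfst (nsnd e)) (ntl x) v}"]) (auto simp: justified_def)
next
  case (prim_Suc e x r v)
  then show ?case
    by (intro trace_extend[of "{ntriple e (ncons (nhd x - 1) (ntl x)) r,
        ntriple (nsnd (nsnd e)) (ncons (nhd x - 1) (ncons r (ntl x))) v}"])
      (auto simp: justified_def)
next
  case (mu e v x)
  obtain w where w: "\<forall>z<v. w z \<noteq> 0 \<and> (\<exists>S. finite S \<and> trace S \<and> ntriple (nsnd e) (ncons z x) (w z) \<in> S)"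
    using mu.IH(2) by metis
  show ?case
  proof (rule trace_extend)
    let ?T = "insert (ntriple (nsnd e) (ncons v x) 0) ((\<lambda>z. ntriple (nsnd e) (ncons z x) (w z)) ` {..<v})"
    show "finite ?T" by simp
    show "\<forall>t\<in>?T. \<exists>S. finite S \<and> trace S \<and> t \<in> S"
      using mu.IH(1) w by auto
    show "justified e x v (insert (ntriple e x v) ?T)"
      unfolding justified_def using mu.hyps(1) w by auto
  qed
qed (auto intro!: trace_extend[of "{}"] simp: justified_def)

lemma code_components_less:
  "nfst e \<noteq> 0 \<Longrightarrow> nsnd e < e \<and> nfst (nsnd e) < e \<and> nsnd (nsnd e) < e"
  using nsnd_less[of e] nfst_le[of "nsnd e"] nsnd_le[of "nsnd e"] by simp

text \<open>Soundness of traces is proved by induction on the code and, for recursion steps, on the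
  recursion argument, so the step lemma takes the lexicographic induction hypothesis.\<close>

lemma eval_code_if_justified:
  assumes "justified e x v S"
    and IH: "\<And>e' x' v'. (e', nhd x') < (e, nhd x) \<Longrightarrow> ntriple e' x' v' \<in> S \<Longrightarrow> eval_code e' x' v'"
  shows "eval_code e x v"
proof -
  have IH_code: "eval_code e' x' v'" if "e' < e" "ntriple e' x' v' \<in> S" for e' x' v'
    using IH that by simp
  have IH_triple: "eval_code (nfst t) (nsnd3 t) (nthd3 t)" if "nfst t < e" "t \<in> S" for t
    using IH_code[of "nfst t" "nsnd3 t" "nthd3 t"] that by simp
  from assms(1) show ?thesis
    unfolding justified_def
  proof (elim disjE conjE bexE)
    fix t assume e: "nfst e = 3" and t: "t \<in> S" "nfst t = nfst (nsnd e)" "nthd3 t = v"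
      "nlength (nsnd3 t) = nlength (nsnd (nsnd e))"
      "\<forall>i<nlength (nsnd (nsnd e)). ntriple (nnth (nsnd (nsnd e)) i) x (nnth (nsnd3 t) i) \<in> S"
    have "\<forall>i<nlength (nsnd (nsnd e)). eval_code (nnth (nsnd (nsnd e)) i) x (nnth (nsnd3 t) i)"
      using t(5) code_components_less[of e] e nnth_less by (metis less_trans zero_neq_numeral IH_code)
    moreover have "eval_code (nfst (nsnd e)) (nsnd3 t) v"
      using IH_triple[OF _ t(1)] t(2,3) code_components_less[of e] e by simp
    ultimately show ?thesis
      using eval_code.comp[OF e _ t(4)] by blast
  next
    fix t assume e: "nfst e = 4" "x \<noteq> 0" "nhd x \<noteq> 0" and t: "t \<in> S" "nfst t = e"
      "nsnd3 t = ncons (nhd x - 1) (ntl x)"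
      "ntriple (nsnd (nsnd e)) (ncons (nhd x - 1) (ncons (nthd3 t) (ntl x))) v \<in> S"
    have "ntriple e (ncons (nhd x - 1) (ntl x)) (nthd3 t) \<in> S"
      using t(1-3) ntriple_nfst_nsnd3_nthd3[of t] by simp
    then have "eval_code e (ncons (nhd x - 1) (ntl x)) (nthd3 t)"
      using IH e(3) by simp
    moreover have "eval_code (nsnd (nsnd e)) (ncons (nhd x - 1) (ncons (nthd3 t) (ntl x))) v"
      using IH_code[OF _ t(4)] code_components_less[of e] e(1) by simp
    ultimately show ?thesis
      by (rule eval_code.prim_Suc[OF e])
  next
    assume e: "nfst e = 5" "ntriple (nsnd e) (ncons v x) 0 \<in> S"
      "\<forall>z<v. \<exists>t\<in>S. nfst t = nsnd e \<and> nsnd3 t = ncons z x \<and> nthd3 t \<noteq> 0"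
    have "\<forall>z<v. \<exists>w. w \<noteq> 0 \<and> eval_code (nsnd e) (ncons z x) w"
      using e(1,3) code_components_less[of e] IH_triple by (metis zero_neq_numeral)
    moreover have "eval_code (nsnd e) (ncons v x) 0"
      using IH_code[OF _ e(2)] code_components_less[of e] e(1) by simp
    ultimately show ?thesis
      using eval_code.mu[OF e(1)] by blast
  next
    assume e: "nfst e = 4" "x \<noteq> 0" "nhd x = 0" "ntriple (nfst (nsnd e)) (ntl x) v \<in> S"
    then show ?thesis
      using eval_code.prim_0[OF e(1-3)] IH_code[OF _ e(4)] code_components_less[of e] by simp
  qed (simp_all add: eval_code_basic_iff)
qed

lemma trace_sound: "trace S \<Longrightarrow> ntriple e x v \<in> S \<Longrightarrow> eval_code e x v"
proof (induction "(e, nhd x)" arbitrary: e x v rule: less_induct)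
  case less
  then have "justified e x v S"
    unfolding trace_def by (metis ntriple_components)
  then show ?case
    by (rule eval_code_if_justified) (use less in blast)
qed

lemma eval_code_iff_trace: "eval_code e x v \<longleftrightarrow> (\<exists>S. finite S \<and> trace S \<and> ntriple e x v \<in> S)"
  using eval_code_has_trace trace_sound by blast

section \<open>Traces coded by numbers\<close>

text \<open>The same notions on the code L of a finite list of triples, with every quantifier bounded;
  the auxiliary predicates name the bounded searches.\<close>

definition nmember :: "nat \<Rightarrow> nat \<Rightarrow> bool" where
  "nmember t L \<longleftrightarrow> (\<exists>j<nlength L. nnth L j = t)"

definition args_in_code :: "nat \<Rightarrow> nat \<Rightarrow> nat \<Rightarrow> nat \<Rightarrow> bool" where
  "args_in_code G x y L \<longleftrightarrow> (\<forall>i<nlength G. nmember (ntriple (nnth G i) x (nnth y i)) L)"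

definition comp_step_code :: "nat \<Rightarrow> nat \<Rightarrow> nat \<Rightarrow> nat \<Rightarrow> bool" where
  "comp_step_code e x v L \<longleftrightarrow> (\<exists>j<nlength L. nfst (nnth L j) = nfst (nsnd e) \<and> nthd3 (nnth L j) = v \<and>
     nlength (nsnd3 (nnth L j)) = nlength (nsnd (nsnd e)) \<and> args_in_code (nsnd (nsnd e)) x (nsnd3 (nnth L j)) L)"

definition prim_step_code :: "nat \<Rightarrow> nat \<Rightarrow> nat \<Rightarrow> nat \<Rightarrow> bool" where
  "prim_step_code e x v L \<longleftrightarrow> (\<exists>j<nlength L. nfst (nnth L j) = e \<and>
     nsnd3 (nnth L j) = ncons (nhd x - 1) (ntl x) \<and>
     nmember (ntriple (nsnd (nsnd e)) (ncons (nhd x - 1) (ncons (nthd3 (nnth L j)) (ntl x))) v) L)"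

definition nonzero_in_code :: "nat \<Rightarrow> nat \<Rightarrow> nat \<Rightarrow> nat \<Rightarrow> bool" where
  "nonzero_in_code e x z L \<longleftrightarrow>
     (\<exists>j<nlength L. nfst (nnth L j) = nsnd e \<and> nsnd3 (nnth L j) = ncons z x \<and> nthd3 (nnth L j) \<noteq> 0)"

definition mu_step_code :: "nat \<Rightarrow> nat \<Rightarrow> nat \<Rightarrow> nat \<Rightarrow> bool" where
  "mu_step_code e x v L \<longleftrightarrow> (\<forall>z<v. nonzero_in_code e x z L)"

definition justified_code :: "nat \<Rightarrow> nat \<Rightarrow> nat \<Rightarrow> nat \<Rightarrow> bool" where
  "justified_code e x v L \<longleftrightarrow>
    (nfst e = 0 \<and> v = 0) \<or> (nfst e = 1 \<and> v = Suc (nhd x)) \<or> (nfst e = 2 \<and> v = nnth x (nsnd e)) \<or>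
    (nfst e = 3 \<and> comp_step_code e x v L) \<or>
    (nfst e = 4 \<and> x \<noteq> 0 \<and> ((nhd x = 0 \<and> nmember (ntriple (nfst (nsnd e)) (ntl x) v) L) \<or>
       (nhd x \<noteq> 0 \<and> prim_step_code e x v L))) \<or>
    (nfst e = 5 \<and> nmember (ntriple (nsnd e) (ncons v x) 0) L \<and> mu_step_code e x v L)"

definition trace_code :: "nat \<Rightarrow> bool" where
  "trace_code L \<longleftrightarrow> (\<forall>j<nlength L. justified_code (nfst (nnth L j)) (nsnd3 (nnth L j)) (nthd3 (nnth L j)) L)"

lemma nmember_list_encode: "nmember t (list_encode ts) \<longleftrightarrow> t \<in> set ts"
  unfolding nmember_def using ex_less_nlength_list_encode[of ts "\<lambda>u. u = t"] by simp

lemma comp_step_code_list_encode: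
  "comp_step_code e x v (list_encode ts) \<longleftrightarrow> (\<exists>t\<in>set ts. nfst t = nfst (nsnd e) \<and> nthd3 t = v \<and>
     nlength (nsnd3 t) = nlength (nsnd (nsnd e)) \<and>
     (\<forall>i<nlength (nsnd (nsnd e)). ntriple (nnth (nsnd (nsnd e)) i) x (nnth (nsnd3 t) i) \<in> set ts))"
  unfolding comp_step_code_def args_in_code_def nmember_list_encode
  by (subst ex_less_nlength_list_encode[symmetric]) (rule refl)

lemma prim_step_code_list_encode:
  "prim_step_code e x v (list_encode ts) \<longleftrightarrow> (\<exists>t\<in>set ts. nfst t = e \<and> nsnd3 t = ncons (nhd x - 1) (ntl x) \<and>
     ntriple (nsnd (nsnd e)) (ncons (nhd x - 1) (ncons (nthd3 t) (ntl x))) v \<in> set ts)"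
  unfolding prim_step_code_def nmember_list_encode
  by (subst ex_less_nlength_list_encode[symmetric]) (rule refl)

lemma mu_step_code_list_encode:
  "mu_step_code e x v (list_encode ts) \<longleftrightarrow>
     (\<forall>z<v. \<exists>t\<in>set ts. nfst t = nsnd e \<and> nsnd3 t = ncons z x \<and> nthd3 t \<noteq> 0)"
proof -
  have "nonzero_in_code e x z (list_encode ts) \<longleftrightarrow>
      (\<exists>t\<in>set ts. nfst t = nsnd e \<and> nsnd3 t = ncons z x \<and> nthd3 t \<noteq> 0)" for z
    unfolding nonzero_in_code_def by (subst ex_less_nlength_list_encode[symmetric]) (rule refl)
  then show ?thesis
    unfolding mu_step_code_def by simp
qed

lemma justified_code_list_encode: "justified_code e x v (list_encode ts) \<longleftrightarrow> justified e x v (set ts)"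
  unfolding justified_code_def justified_def comp_step_code_list_encode prim_step_code_list_encode
    mu_step_code_list_encode nmember_list_encode ..

lemma trace_code_list_encode: "trace_code (list_encode ts) \<longleftrightarrow> trace (set ts)"
  unfolding trace_code_def trace_def justified_code_list_encode
  by (subst all_less_nlength_list_encode[symmetric]) (rule refl)

lemma eval_code_iff_trace_code: "eval_code e x v \<longleftrightarrow> (\<exists>L. trace_code L \<and> nmember (ntriple e x v) L)"
proof
  assume "eval_code e x v"
  then obtain S where "finite S" "trace S" "ntriple e x v \<in> S"
    using eval_code_iff_trace by blast
  moreover obtain ts where "set ts = S"
    using finite_list[OF \<open>finite S\<close>] by blast
  ultimately show "\<exists>L. trace_code L \<and> nmember (ntriple e x v) L"
    by (intro exI[of _ "list_encode ts"]) (simp add: trace_code_list_encode nmember_list_encode)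
next
  assume "\<exists>L. trace_code L \<and> nmember (ntriple e x v) L"
  then obtain L where "trace_code (list_encode (list_decode L))"
    "nmember (ntriple e x v) (list_encode (list_decode L))"
    by auto
  then show "eval_code e x v"
    unfolding trace_code_list_encode nmember_list_encode using trace_sound by blast
qed

lemma computable_nmember: "computable_rel 2 (\<lambda>xs. nmember (xs ! 0) (xs ! 1))"
  by (rule computable_rel_bex[of 2 "\<lambda>ys. nnth (ys ! 2) (ys ! 0) = ys ! 1" "\<lambda>xs. nlength (xs ! 1)"])
    (intro computable_rel_intros recursive_intros | simp add: nmember_def nth_Cons')+

lemmas computable_nmemberI = computable_rel_compose2[OF computable_nmember]

lemma computable_args_in_code: "computable_rel 4 (\<lambda>xs. args_in_code (xs ! 0) (xs ! 1) (xs ! 2) (xs ! 3))"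
  by (rule computable_rel_ball[of 4
        "\<lambda>ys. nmember (ntriple (nnth (ys ! 1) (ys ! 0)) (ys ! 2) (nnth (ys ! 3) (ys ! 0))) (ys ! 4)"
        "\<lambda>xs. nlength (xs ! 0)"])
    (intro computable_nmemberI recursive_intros | simp add: args_in_code_def nth_Cons')+

lemma computable_comp_step_code: "computable_rel 4 (\<lambda>xs. comp_step_code (xs ! 0) (xs ! 1) (xs ! 2) (xs ! 3))"
  by (rule computable_rel_bex[of 4 "\<lambda>ys. nfst (nnth (ys ! 4) (ys ! 0)) = nfst (nsnd (ys ! 1)) \<and>
        nthd3 (nnth (ys ! 4) (ys ! 0)) = ys ! 3 \<and>
        nlength (nsnd3 (nnth (ys ! 4) (ys ! 0))) = nlength (nsnd (nsnd (ys ! 1))) \<and>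
        args_in_code (nsnd (nsnd (ys ! 1))) (ys ! 2) (nsnd3 (nnth (ys ! 4) (ys ! 0))) (ys ! 4)"
        "\<lambda>xs. nlength (xs ! 3)"])
    (intro computable_rel_compose4[OF computable_args_in_code] computable_rel_intros recursive_intros
      | simp add: comp_step_code_def nth_Cons')+

lemma computable_prim_step_code: "computable_rel 4 (\<lambda>xs. prim_step_code (xs ! 0) (xs ! 1) (xs ! 2) (xs ! 3))"
  by (rule computable_rel_bex[of 4 "\<lambda>ys. nfst (nnth (ys ! 4) (ys ! 0)) = ys ! 1 \<and>
        nsnd3 (nnth (ys ! 4) (ys ! 0)) = ncons (nhd (ys ! 2) - 1) (ntl (ys ! 2)) \<and>
        nmember (ntriple (nsnd (nsnd (ys ! 1)))
          (ncons (nhd (ys ! 2) - 1) (ncons (nthd3 (nnth (ys ! 4) (ys ! 0))) (ntl (ys ! 2)))) (ys ! 3)) (ys ! 4)"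
        "\<lambda>xs. nlength (xs ! 3)"])
    (intro computable_nmemberI computable_rel_intros recursive_intros
      | simp add: prim_step_code_def nth_Cons')+

lemma computable_nonzero_in_code: "computable_rel 4 (\<lambda>xs. nonzero_in_code (xs ! 0) (xs ! 1) (xs ! 2) (xs ! 3))"
  by (rule computable_rel_bex[of 4 "\<lambda>ys. nfst (nnth (ys ! 4) (ys ! 0)) = nsnd (ys ! 1) \<and>
        nsnd3 (nnth (ys ! 4) (ys ! 0)) = ncons (ys ! 3) (ys ! 2) \<and> nthd3 (nnth (ys ! 4) (ys ! 0)) \<noteq> 0"
        "\<lambda>xs. nlength (xs ! 3)"])
    (intro computable_rel_intros recursive_intros | simp add: nonzero_in_code_def nth_Cons')+

lemma computable_mu_step_code: "computable_rel 4 (\<lambda>xs. mu_step_code (xs ! 0) (xs ! 1) (xs ! 2) (xs ! 3))"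
  by (rule computable_rel_ball[of 4 "\<lambda>ys. nonzero_in_code (ys ! 1) (ys ! 2) (ys ! 0) (ys ! 4)" "\<lambda>xs. xs ! 2"])
    (intro computable_rel_compose4[OF computable_nonzero_in_code] recursive_intros
      | simp add: mu_step_code_def nth_Cons')+

lemma computable_justified_code: "computable_rel 4 (\<lambda>xs. justified_code (xs ! 0) (xs ! 1) (xs ! 2) (xs ! 3))"
  unfolding justified_code_def
  by (intro computable_rel_intros computable_nmemberI recursive_intros
      computable_rel_compose4[OF computable_comp_step_code]
      computable_rel_compose4[OF computable_prim_step_code]
      computable_rel_compose4[OF computable_mu_step_code]; simp)

lemma computable_trace_code: "computable_rel 1 (\<lambda>xs. trace_code (xs ! 0))"
  by (rule computable_rel_ball[of 1 "\<lambda>ys. justified_code (nfst (nnth (ys ! 1) (ys ! 0)))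
        (nsnd3 (nnth (ys ! 1) (ys ! 0))) (nthd3 (nnth (ys ! 1) (ys ! 0))) (ys ! 1)" "\<lambda>xs. nlength (xs ! 0)"])
    (intro computable_rel_compose4[OF computable_justified_code] recursive_intros
      | simp add: trace_code_def nth_Cons')+

text \<open>A witness z for the existence of y with eval_code e (ncons y c) 0 packs a trace code nfst z
  together with y = nsnd z.\<close>

definition zero_witness :: "nat \<Rightarrow> nat \<Rightarrow> nat \<Rightarrow> bool" where
  "zero_witness e z c \<longleftrightarrow> trace_code (nfst z) \<and> nmember (ntriple e (ncons (nsnd z) c) 0) (nfst z)"

lemma ex_eval_code_zero_iff: "(\<exists>y. eval_code e (ncons y c) 0) \<longleftrightarrow> (\<exists>z. zero_witness e z c)"
proof
  assume "\<exists>y. eval_code e (ncons y c) 0"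
  then obtain y L where "trace_code L" "nmember (ntriple e (ncons y c) 0) L"
    using eval_code_iff_trace_code by blast
  then show "\<exists>z. zero_witness e z c"
    unfolding zero_witness_def by (intro exI[of _ "npair L y"]) simp
next
  assume "\<exists>z. zero_witness e z c"
  then show "\<exists>y. eval_code e (ncons y c) 0"
    unfolding zero_witness_def using eval_code_iff_trace_code by blast
qed

lemma computable_zero_witness: "computable_rel 3 (\<lambda>xs. zero_witness (xs ! 1) (xs ! 0) (xs ! 2))"
  unfolding zero_witness_def
  by (intro computable_rel_intros computable_rel_compose1[OF computable_trace_code] computable_nmemberI
      recursive_intros; simp)

section \<open>Closure properties of the arithmetical hierarchy\<close>

text \<open>The arity appears as m = Suc k so that the rule also applies to numeral arities.\<close>

lemma Sigma_rel_SucI: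
  "Sigma_rel n m (\<lambda>xs. \<not> Q xs) \<Longrightarrow> m = Suc k \<Longrightarrow> (\<And>xs. length xs = k \<Longrightarrow> P xs \<longleftrightarrow> (\<exists>y. Q (y # xs))) \<Longrightarrow>
   Sigma_rel (Suc n) k P"
  by auto

lemma Sigma_rel_cong:
  "Sigma_rel n k P \<Longrightarrow> (\<And>xs. length xs = k \<Longrightarrow> P xs \<longleftrightarrow> Q xs) \<Longrightarrow> Sigma_rel n k Q"
proof (induction n)
  case 0
  then show ?case using computable_rel_cong[of k P Q] by simp
qed simp

lemma Sigma_rel_comp:
  "Sigma_rel n m P \<Longrightarrow> length fs = m \<Longrightarrow> \<forall>f\<in>set fs. recursive k f \<Longrightarrow>
   Sigma_rel n k (\<lambda>xs. P (map (\<lambda>f. f xs) fs))"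
proof (induction n arbitrary: m P k fs)
  case 0
  then show ?case using computable_rel_comp[of m P fs k] by simp
next
  case (Suc n)
  from Suc.prems(1) obtain Q where Q: "Sigma_rel n (Suc m) (\<lambda>xs. \<not> Q xs)"
    "\<forall>xs. length xs = m \<longrightarrow> (P xs \<longleftrightarrow> (\<exists>y. Q (y # xs)))" by auto
  let ?fs = "hd # map (\<lambda>f ys. f (tl ys)) fs"
  have "Sigma_rel n (Suc k) (\<lambda>ys. \<not> Q (map (\<lambda>f. f ys) ?fs))"
    using Suc.IH[OF Q(1), of ?fs "Suc k"] Suc.prems(2,3) by (auto intro: recursive_hd recursive_tl)
  then have "Sigma_rel n (Suc k) (\<lambda>ys. \<not> Q (hd ys # map (\<lambda>f. f (tl ys)) fs))"
    by (simp add: comp_def)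
  then show ?case
    by (rule Sigma_rel_SucI) (use Q(2) Suc.prems(2) in simp_all)
qed

lemma Sigma_rel_compose2:
  "Sigma_rel n 2 (\<lambda>xs. R (xs ! 0) (xs ! 1)) \<Longrightarrow> recursive k f \<Longrightarrow> recursive k g \<Longrightarrow>
   Sigma_rel n k (\<lambda>xs. R (f xs) (g xs))"
  using Sigma_rel_comp[of n 2 "\<lambda>xs. R (xs ! 0) (xs ! 1)" "[f, g]" k] by simp

lemma Sigma_rel_compose3:
  "Sigma_rel n 3 (\<lambda>xs. R (xs ! 0) (xs ! 1) (xs ! 2)) \<Longrightarrow> recursive k f \<Longrightarrow> recursive k g \<Longrightarrow>
   recursive k h \<Longrightarrow> Sigma_rel n k (\<lambda>xs. R (f xs) (g xs) (h xs))"
  using Sigma_rel_comp[of n 3 "\<lambda>xs. R (xs ! 0) (xs ! 1) (xs ! 2)" "[f, g, h]" k]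
  by (simp add: numeral_3_eq_3)

lemma computable_imp_Sigma_rel: "computable_rel k P \<Longrightarrow> Sigma_rel n k P"
proof (induction n arbitrary: k P)
  case (Suc n)
  have "Sigma_rel n (Suc k) (\<lambda>ys. \<not> P (tl ys))"
    by (rule Suc.IH[OF computable_rel_tl[OF computable_rel_neg[OF Suc.prems]]])
  then show ?case
    by (rule Sigma_rel_SucI[where Q = "\<lambda>ys. P (tl ys)"]) simp_all
qed simp

text \<open>In the successor case a conjunction of two existentials is merged into one existential
  over pairs, whose matrix is a disjunction of negations one level down.\<close>

lemma Sigma_rel_conj_disj:
  "Sigma_rel n k P \<Longrightarrow> Sigma_rel n k Q \<Longrightarrow>
   Sigma_rel n k (\<lambda>xs. P xs \<and> Q xs) \<and> Sigma_rel n k (\<lambda>xs. P xs \<or> Q xs)"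
proof (induction n arbitrary: k P Q)
  case 0
  then show ?case by (simp add: computable_rel_conj computable_rel_disj)
next
  case (Suc n)
  from Suc.prems obtain P' Q' where
    P': "Sigma_rel n (Suc k) (\<lambda>xs. \<not> P' xs)" "\<forall>xs. length xs = k \<longrightarrow> (P xs \<longleftrightarrow> (\<exists>y. P' (y # xs)))" and
    Q': "Sigma_rel n (Suc k) (\<lambda>xs. \<not> Q' xs)" "\<forall>xs. length xs = k \<longrightarrow> (Q xs \<longleftrightarrow> (\<exists>y. Q' (y # xs)))"
    by auto
  have "Sigma_rel n (Suc k) (\<lambda>xs. \<not> (P' xs \<or> Q' xs))"
    using Suc.IH[OF P'(1) Q'(1)] by simp
  then have disj: "Sigma_rel (Suc n) k (\<lambda>xs. P xs \<or> Q xs)"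
    by (rule Sigma_rel_SucI) (use P'(2) Q'(2) in auto)
  let ?ps = "map (\<lambda>i ys. ys ! Suc i) [0..<k]"
  have "Sigma_rel n (Suc k) (\<lambda>ys. \<not> P' (nfst (hd ys) # tl ys))"
  proof (rule Sigma_rel_cong[OF Sigma_rel_comp[OF P'(1)]])
    show "\<forall>f\<in>set ((\<lambda>ys. nfst (hd ys)) # ?ps). recursive (Suc k) f"
      by (auto intro!: recursive_intros recursive_hd)
  qed (simp_all add: map_nth_Suc_eq_tl del: map_map)
  moreover have "Sigma_rel n (Suc k) (\<lambda>ys. \<not> Q' (nsnd (hd ys) # tl ys))"
  proof (rule Sigma_rel_cong[OF Sigma_rel_comp[OF Q'(1)]])
    show "\<forall>f\<in>set ((\<lambda>ys. nsnd (hd ys)) # ?ps). recursive (Suc k) f"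
      by (auto intro!: recursive_intros recursive_hd)
  qed (simp_all add: map_nth_Suc_eq_tl del: map_map)
  ultimately have "Sigma_rel n (Suc k) (\<lambda>ys. \<not> P' (nfst (hd ys) # tl ys) \<or> \<not> Q' (nsnd (hd ys) # tl ys))"
    using Suc.IH by blast
  then have "Sigma_rel n (Suc k) (\<lambda>ys. \<not> (P' (nfst (hd ys) # tl ys) \<and> Q' (nsnd (hd ys) # tl ys)))"
    by simp
  then have conj: "Sigma_rel (Suc n) k (\<lambda>xs. P xs \<and> Q xs)"
  proof (rule Sigma_rel_SucI, simp)
    fix xs :: "nat list" assume xs: "length xs = k"
    show "P xs \<and> Q xs \<longleftrightarrow> (\<exists>w. P' (nfst (hd (w # xs)) # tl (w # xs)) \<and> Q' (nsnd (hd (w # xs)) # tl (w # xs)))"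
    proof
      assume "P xs \<and> Q xs"
      then obtain y z where "P' (y # xs)" "Q' (z # xs)"
        using P'(2) Q'(2) xs by blast
      then show "\<exists>w. P' (nfst (hd (w # xs)) # tl (w # xs)) \<and> Q' (nsnd (hd (w # xs)) # tl (w # xs))"
        by (intro exI[of _ "npair y z"]) simp
    qed (use P'(2) Q'(2) xs in auto)
  qed
  from conj disj show ?case ..
qed

lemma Sigma_rel_conj: "Sigma_rel n k P \<Longrightarrow> Sigma_rel n k Q \<Longrightarrow> Sigma_rel n k (\<lambda>xs. P xs \<and> Q xs)"
  using Sigma_rel_conj_disj by blast

lemma Sigma_rel_disj: "Sigma_rel n k P \<Longrightarrow> Sigma_rel n k Q \<Longrightarrow> Sigma_rel n k (\<lambda>xs. P xs \<or> Q xs)"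
  using Sigma_rel_conj_disj by blast

lemma Pi_rel_conj: "Pi_rel n k P \<Longrightarrow> Pi_rel n k Q \<Longrightarrow> Pi_rel n k (\<lambda>xs. P xs \<and> Q xs)"
  unfolding Pi_rel_def using Sigma_rel_disj[of n k "\<lambda>xs. \<not> P xs" "\<lambda>xs. \<not> Q xs"] by simp

lemma Pi_rel_disj: "Pi_rel n k P \<Longrightarrow> Pi_rel n k Q \<Longrightarrow> Pi_rel n k (\<lambda>xs. P xs \<or> Q xs)"
  unfolding Pi_rel_def using Sigma_rel_conj[of n k "\<lambda>xs. \<not> P xs" "\<lambda>xs. \<not> Q xs"] by simp

lemma computable_imp_Pi_rel: "computable_rel k P \<Longrightarrow> Pi_rel n k P"
  unfolding Pi_rel_def by (rule computable_imp_Sigma_rel[OF computable_rel_neg])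

lemma Pi_rel_cong: "Pi_rel n k P \<Longrightarrow> (\<And>xs. length xs = k \<Longrightarrow> P xs \<longleftrightarrow> Q xs) \<Longrightarrow> Pi_rel n k Q"
  unfolding Pi_rel_def by (erule Sigma_rel_cong) simp

lemma Pi_rel_compose2:
  "Pi_rel n 2 (\<lambda>xs. R (xs ! 0) (xs ! 1)) \<Longrightarrow> recursive k f \<Longrightarrow> recursive k g \<Longrightarrow>
   Pi_rel n k (\<lambda>xs. R (f xs) (g xs))"
  unfolding Pi_rel_def by (rule Sigma_rel_compose2[of n "\<lambda>a b. \<not> R a b"])

lemma Pi_rel_compose3:
  "Pi_rel n 3 (\<lambda>xs. R (xs ! 0) (xs ! 1) (xs ! 2)) \<Longrightarrow> recursive k f \<Longrightarrow> recursive k g \<Longrightarrow>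
   recursive k h \<Longrightarrow> Pi_rel n k (\<lambda>xs. R (f xs) (g xs) (h xs))"
  unfolding Pi_rel_def by (rule Sigma_rel_compose3[of n "\<lambda>a b c. \<not> R a b c"])

text \<open>For the successor case the bounded index i and the witness y of a counterexample are
  merged into the single witness npair i y.\<close>

lemma Pi_rel_bounded_all:
  assumes "Pi_rel n (Suc k) P" "recursive k b"
  shows "Pi_rel n k (\<lambda>xs. \<forall>i<b xs. P (i # xs))"
proof (cases n)
  case 0
  then show ?thesis
    using computable_rel_bounded_ex[OF _ assms(2), of "\<lambda>xs. \<not> P xs"] assms(1) by (simp add: Pi_rel_def)
next
  case (Suc m)
  from assms(1) obtain Q where Q: "Sigma_rel m (Suc (Suc k)) (\<lambda>xs. \<not> Q xs)"
    "\<forall>ys. length ys = Suc k \<longrightarrow> (\<not> P ys \<longleftrightarrow> (\<exists>y. Q (y # ys)))"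
    unfolding Pi_rel_def Suc by auto
  let ?fs = "(\<lambda>ys. nsnd (hd ys)) # (\<lambda>ys. nfst (hd ys)) # map (\<lambda>i ys. ys ! Suc i) [0..<k]"
  have "Sigma_rel m (Suc k) (\<lambda>ys. \<not> Q (nsnd (hd ys) # nfst (hd ys) # tl ys))"
  proof (rule Sigma_rel_cong[OF Sigma_rel_comp[OF Q(1)]])
    show "\<forall>f\<in>set ?fs. recursive (Suc k) f"
      by (auto intro!: recursive_intros recursive_hd)
  qed (simp_all add: map_nth_Suc_eq_tl del: map_map)
  moreover have "Sigma_rel m (Suc k) (\<lambda>ys. \<not> nfst (hd ys) < b (tl ys))"
    by (intro computable_imp_Sigma_rel computable_rel_neg computable_rel_less recursive_intros
        recursive_hd recursive_tl[OF assms(2)])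
  ultimately have
    "Sigma_rel m (Suc k) (\<lambda>ys. \<not> (nfst (hd ys) < b (tl ys) \<and> Q (nsnd (hd ys) # nfst (hd ys) # tl ys)))"
    using Sigma_rel_disj by fastforce
  then have "Sigma_rel (Suc m) k (\<lambda>xs. \<not> (\<forall>i<b xs. P (i # xs)))"
  proof (rule Sigma_rel_SucI, simp)
    fix xs :: "nat list" assume xs: "length xs = k"
    show "\<not> (\<forall>i<b xs. P (i # xs)) \<longleftrightarrow>
      (\<exists>w. nfst (hd (w # xs)) < b (tl (w # xs)) \<and> Q (nsnd (hd (w # xs)) # nfst (hd (w # xs)) # tl (w # xs)))"
    proof
      assume "\<not> (\<forall>i<b xs. P (i # xs))"
      then obtain i y where "i < b xs" "Q (y # i # xs)"
        using Q(2) xs by auto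
      then show "\<exists>w. nfst (hd (w # xs)) < b (tl (w # xs)) \<and>
          Q (nsnd (hd (w # xs)) # nfst (hd (w # xs)) # tl (w # xs))"
        by (intro exI[of _ "npair i y"]) simp
    qed (use Q(2) xs in force)
  qed
  then show ?thesis
    unfolding Pi_rel_def Suc .
qed

lemma Pi_rel_ball:
  assumes "Pi_rel n (Suc k) P" "recursive k b"
    and "\<And>xs. length xs = k \<Longrightarrow> Q xs \<longleftrightarrow> (\<forall>i<b xs. P (i # xs))"
  shows "Pi_rel n k Q"
  using Pi_rel_cong[OF Pi_rel_bounded_all[OF assms(1,2)]] assms(3) by blast

section \<open>A universal relation at each level\<close>

text \<open>Alternately negate and existentially quantify the Sigma^0_1 relation "the function with
  code e has a zero".\<close>

fun univ_matrix :: "nat \<Rightarrow> nat \<Rightarrow> nat \<Rightarrow> nat \<Rightarrow> bool" where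
  "univ_matrix 0 e z c = zero_witness e z c"
| "univ_matrix (Suc m) e z c = (\<not> (\<exists>y. univ_matrix m e y (ncons z c)))"

definition univ_Sigma :: "nat \<Rightarrow> nat \<Rightarrow> nat \<Rightarrow> bool" where
  "univ_Sigma m e c \<longleftrightarrow> (\<exists>z. univ_matrix m e z c)"

lemma Pi_rel_univ_matrix: "Pi_rel m 3 (\<lambda>xs. univ_matrix m (xs ! 1) (xs ! 0) (xs ! 2))"
proof (induction m)
  case 0
  then show ?case
    using computable_zero_witness by (simp add: computable_imp_Pi_rel)
next
  case (Suc m)
  have "Sigma_rel (Suc m) 2 (\<lambda>xs. univ_Sigma m (xs ! 0) (xs ! 1))"
    by (rule Sigma_rel_SucI[OF Suc[unfolded Pi_rel_def]]) (simp_all add: univ_Sigma_def)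
  then have "Sigma_rel (Suc m) 3 (\<lambda>xs. univ_Sigma m (xs ! 1) (ncons (xs ! 0) (xs ! 2)))"
    by (rule Sigma_rel_compose2) (intro recursive_intros; simp)+
  then show ?case
    unfolding Pi_rel_def by (rule Sigma_rel_cong) (simp add: univ_Sigma_def)
qed

lemma univ_Sigma_universal:
  "Sigma_rel (Suc m) k P \<Longrightarrow> \<exists>e. \<forall>xs. length xs = k \<longrightarrow> (P xs \<longleftrightarrow> univ_Sigma m e (list_encode xs))"
proof (induction m arbitrary: k P)
  case 0
  then obtain Q where Q: "computable_rel (Suc k) (\<lambda>xs. \<not> Q xs)"
    "\<forall>xs. length xs = k \<longrightarrow> (P xs \<longleftrightarrow> (\<exists>y. Q (y # xs)))" by auto
  obtain g where g: "recfn (Suc k) g" "\<forall>xs. length xs = Suc k \<longrightarrow> (Q xs \<longleftrightarrow> g xs = 0)"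
    using computable_rel_neg[OF Q(1)] unfolding computable_rel_def by auto
  obtain e where "code_computes e (Suc k) g"
    using recfn_has_code[OF g(1)] by blast
  then have "eval_code e (ncons y (list_encode xs)) 0 \<longleftrightarrow> Q (y # xs)" if "length xs = k" for xs y
    using g(2) that unfolding code_computes_def
    by (metis (no_types, lifting) length_Cons list_encode_Cons)
  then have "P xs \<longleftrightarrow> univ_Sigma 0 e (list_encode xs)" if "length xs = k" for xs
    using Q(2) that by (simp add: univ_Sigma_def ex_eval_code_zero_iff[symmetric])
  then show ?case
    by blast
next
  case (Suc m)
  from Suc.prems obtain Q where Q: "Sigma_rel (Suc m) (Suc k) (\<lambda>xs. \<not> Q xs)"
    "\<forall>xs. length xs = k \<longrightarrow> (P xs \<longleftrightarrow> (\<exists>y. Q (y # xs)))" by auto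
  obtain e where e: "\<forall>xs. length xs = Suc k \<longrightarrow> (\<not> Q xs \<longleftrightarrow> univ_Sigma m e (list_encode xs))"
    using Suc.IH[OF Q(1)] by blast
  have "Q (y # xs) \<longleftrightarrow> \<not> univ_Sigma m e (ncons y (list_encode xs))" if "length xs = k" for xs y
    using e[rule_format, of "y # xs"] that by (auto simp del: list_encode.simps simp: list_encode_Cons)
  then have "P xs \<longleftrightarrow> univ_Sigma (Suc m) e (list_encode xs)" if "length xs = k" for xs
    using Q(2) that by (simp add: univ_Sigma_def)
  then show ?case
    by blast
qed

section \<open>The graph\<close>

text \<open>A link is a triple t = (a, b, z) coded by ntriple a b z; it is witnessed for index e when z
  witnesses that (a, b) or (b, a) belongs to the e-th Sigma^0_(m+1) relation.  A walk is a
  nonempty list of witnessed links in which each link starts where the previous one ends.\<close>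

definition pair_witness :: "nat \<Rightarrow> nat \<Rightarrow> nat \<Rightarrow> nat \<Rightarrow> nat \<Rightarrow> bool" where
  "pair_witness m e z a b \<longleftrightarrow> univ_matrix m e z (ncons a (ncons b 0))"

definition witnessed_link :: "nat \<Rightarrow> nat \<Rightarrow> nat \<Rightarrow> bool" where
  "witnessed_link m e t \<longleftrightarrow>
     pair_witness m e (nthd3 t) (nfst t) (nsnd3 t) \<or> pair_witness m e (nthd3 t) (nsnd3 t) (nfst t)"

definition linked_code :: "nat \<Rightarrow> bool" where
  "linked_code L \<longleftrightarrow> (\<forall>i<nlength L - 1. nsnd3 (nnth L i) = nfst (nnth L (Suc i)))"

definition witnessed_links_code :: "nat \<Rightarrow> nat \<Rightarrow> nat \<Rightarrow> bool" where
  "witnessed_links_code m e L \<longleftrightarrow> (\<forall>i<nlength L. witnessed_link m e (nnth L i))"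

definition walk_code :: "nat \<Rightarrow> nat \<Rightarrow> nat \<Rightarrow> bool" where
  "walk_code m e L \<longleftrightarrow> nlength L \<noteq> 0 \<and> linked_code L \<and> witnessed_links_code m e L"

definition endpoint_code :: "nat \<Rightarrow> nat \<Rightarrow> bool" where
  "endpoint_code x L \<longleftrightarrow> (\<exists>i<nlength L. nfst (nnth L i) = x \<or> nsnd3 (nnth L i) = x)"

definition share_endpoint_code :: "nat \<Rightarrow> nat \<Rightarrow> bool" where
  "share_endpoint_code L1 L2 \<longleftrightarrow>
     (\<exists>i<nlength L1. endpoint_code (nfst (nnth L1 i)) L2 \<or> endpoint_code (nsnd3 (nnth L1 i)) L2)"

text \<open>Vertices 0, 1, 2, 3 form a path, which makes the diameter exactly 3.  A vertex
  4 + npair 0 (npair e x) stands for the point x of index e, a vertex 4 + npair 1 (npair e L) for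
  the list L of links of index e; it is adjacent to the points of L when L codes a walk, and to
  the other walks with a common point.  All other vertices are isolated.\<close>

definition ugraph_edge :: "nat \<Rightarrow> nat \<Rightarrow> nat \<Rightarrow> bool" where
  "ugraph_edge m a b \<longleftrightarrow> a \<noteq> b \<and> ((a < 4 \<and> b < 4 \<and> (a = Suc b \<or> b = Suc a)) \<or>
    (4 \<le> a \<and> 4 \<le> b \<and> nfst (nsnd (a - 4)) = nfst (nsnd (b - 4)) \<and> (
      (nfst (a - 4) = 0 \<and> nfst (b - 4) = 1 \<and> endpoint_code (nsnd (nsnd (a - 4))) (nsnd (nsnd (b - 4))) \<and>
         walk_code m (nfst (nsnd (b - 4))) (nsnd (nsnd (b - 4)))) \<or>
      (nfst (a - 4) = 1 \<and> nfst (b - 4) = 0 \<and> endpoint_code (nsnd (nsnd (b - 4))) (nsnd (nsnd (a - 4))) \<and>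
         walk_code m (nfst (nsnd (a - 4))) (nsnd (nsnd (a - 4)))) \<or>
      (nfst (a - 4) = 1 \<and> nfst (b - 4) = 1 \<and> share_endpoint_code (nsnd (nsnd (a - 4))) (nsnd (nsnd (b - 4))) \<and>
         walk_code m (nfst (nsnd (a - 4))) (nsnd (nsnd (a - 4))) \<and>
         walk_code m (nfst (nsnd (b - 4))) (nsnd (nsnd (b - 4)))))))"

definition ugraph :: "nat \<Rightarrow> (nat \<times> nat) set" where
  "ugraph m = {(a, b). ugraph_edge m a b}"

lemma in_ugraph_iff [simp]: "(a, b) \<in> ugraph m \<longleftrightarrow> ugraph_edge m a b"
  by (simp add: ugraph_def)

lemma share_endpoint_code_iff: "share_endpoint_code L1 L2 \<longleftrightarrow> (\<exists>p. endpoint_code p L1 \<and> endpoint_code p L2)"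
  unfolding share_endpoint_code_def endpoint_code_def by blast

lemma ugraph_edge_sym: "ugraph_edge m a b \<Longrightarrow> ugraph_edge m b a"
  unfolding ugraph_edge_def share_endpoint_code_iff by auto

lemma ugraph_edge_irrefl: "\<not> ugraph_edge m a a"
  unfolding ugraph_edge_def by auto

lemma simple_graph_ugraph: "simple_graph (ugraph m)"
  unfolding simple_graph_def sym_def irrefl_def by (auto intro: ugraph_edge_sym simp: ugraph_edge_irrefl)

lemma Pi_rel_pair_witness:
  "recursive k f \<Longrightarrow> recursive k g \<Longrightarrow> recursive k h \<Longrightarrow> recursive k i \<Longrightarrow>
   Pi_rel m k (\<lambda>xs. pair_witness m (f xs) (g xs) (h xs) (i xs))"
  unfolding pair_witness_def
  by (rule Pi_rel_compose3[of m "\<lambda>z e c. univ_matrix m e z c", OF Pi_rel_univ_matrix])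
    (assumption | rule recursive_intros)+

lemma Pi_rel_witnessed_link: "recursive k f \<Longrightarrow> recursive k g \<Longrightarrow> Pi_rel m k (\<lambda>xs. witnessed_link m (f xs) (g xs))"
  unfolding witnessed_link_def by (intro Pi_rel_disj Pi_rel_pair_witness recursive_intros)

lemma Pi_rel_witnessed_links_code: "Pi_rel m 2 (\<lambda>xs. witnessed_links_code m (xs ! 0) (xs ! 1))"
  by (rule Pi_rel_ball[of m 2 "\<lambda>ys. witnessed_link m (ys ! 1) (nnth (ys ! 2) (ys ! 0))" "\<lambda>xs. nlength (xs ! 1)"])
    (intro Pi_rel_witnessed_link recursive_intros | simp add: witnessed_links_code_def nth_Cons')+

lemma computable_linked_code: "computable_rel 1 (\<lambda>xs. linked_code (xs ! 0))"
  by (rule computable_rel_ball[of 1 "\<lambda>ys. nsnd3 (nnth (ys ! 1) (ys ! 0)) = nfst (nnth (ys ! 1) (Suc (ys ! 0)))"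
        "\<lambda>xs. nlength (xs ! 0) - 1"])
    (intro computable_rel_intros recursive_intros | simp add: linked_code_def nth_Cons')+

lemma computable_endpoint_code: "computable_rel 2 (\<lambda>xs. endpoint_code (xs ! 0) (xs ! 1))"
  by (rule computable_rel_bex[of 2
        "\<lambda>ys. nfst (nnth (ys ! 2) (ys ! 0)) = ys ! 1 \<or> nsnd3 (nnth (ys ! 2) (ys ! 0)) = ys ! 1"
        "\<lambda>xs. nlength (xs ! 1)"])
    (intro computable_rel_intros recursive_intros | simp add: endpoint_code_def nth_Cons')+

lemmas computable_endpoint_codeI = computable_rel_compose2[OF computable_endpoint_code]

lemma computable_share_endpoint_code: "computable_rel 2 (\<lambda>xs. share_endpoint_code (xs ! 0) (xs ! 1))"
  by (rule computable_rel_bex[of 2 "\<lambda>ys. endpoint_code (nfst (nnth (ys ! 1) (ys ! 0))) (ys ! 2) \<or>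
        endpoint_code (nsnd3 (nnth (ys ! 1) (ys ! 0))) (ys ! 2)" "\<lambda>xs. nlength (xs ! 0)"])
    (intro computable_endpoint_codeI computable_rel_intros recursive_intros
      | simp add: share_endpoint_code_def nth_Cons')+

lemma Pi_rel_walk_code: "recursive k f \<Longrightarrow> recursive k g \<Longrightarrow> Pi_rel m k (\<lambda>xs. walk_code m (f xs) (g xs))"
  unfolding walk_code_def
  by (intro Pi_rel_conj Pi_rel_compose2[of m "witnessed_links_code m", OF Pi_rel_witnessed_links_code]
      computable_imp_Pi_rel computable_rel_intros computable_rel_compose1[OF computable_linked_code]
      recursive_intros)

lemma Pi_rel_ugraph_edge: "Pi_rel m 2 (\<lambda>xs. ugraph_edge m (xs ! 0) (xs ! 1))"
  unfolding ugraph_edge_def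
  by (intro Pi_rel_conj Pi_rel_disj Pi_rel_walk_code computable_imp_Pi_rel computable_rel_intros
      computable_rel_compose2[OF computable_share_endpoint_code] computable_endpoint_codeI recursive_intros; simp)

lemma Pi_binrel_ugraph: "Pi_binrel m (ugraph m)"
  unfolding Pi_binrel_def using Pi_rel_ugraph_edge[of m] by (rule Pi_rel_cong) (simp add: as_rel2_def)

type_synonym link = "nat \<times> nat \<times> nat"

definition link_code :: "link \<Rightarrow> nat" where
  "link_code t = ntriple (fst t) (fst (snd t)) (snd (snd t))"

definition walk_encode :: "link list \<Rightarrow> nat" where
  "walk_encode ts = list_encode (map link_code ts)"

lemma link_code_components [simp]:
  "nfst (link_code t) = fst t" "nsnd3 (link_code t) = fst (snd t)" "nthd3 (link_code t) = snd (snd t)"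
  by (simp_all add: link_code_def)

lemma walk_encode_eq_iff [simp]: "walk_encode ts = walk_encode us \<longleftrightarrow> ts = us"
proof -
  have "inj link_code"
    by (rule injI) (metis link_code_components prod.collapse)
  then show ?thesis
    unfolding walk_encode_def list_encode_eq using inj_map_eq_map by blast
qed

lemma surj_walk_encode: "walk_encode (map (\<lambda>t. (nfst t, nsnd3 t, nthd3 t)) (list_decode L)) = L"
  by (simp add: walk_encode_def link_code_def comp_def)

lemma nlength_walk_encode [simp]: "nlength (walk_encode ts) = length ts"
  by (simp add: walk_encode_def nlength_list_encode)

lemma nnth_walk_encode [simp]: "i < length ts \<Longrightarrow> nnth (walk_encode ts) i = link_code (ts ! i)"
  by (simp add: walk_encode_def nnth_list_encode)

definition linked :: "link list \<Rightarrow> bool" where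
  "linked ts \<longleftrightarrow> (\<forall>i. Suc i < length ts \<longrightarrow> fst (snd (ts ! i)) = fst (ts ! Suc i))"

definition points :: "link list \<Rightarrow> nat set" where
  "points ts = fst ` set ts \<union> (\<lambda>t. fst (snd t)) ` set ts"

definition witnessed :: "nat \<Rightarrow> nat \<Rightarrow> link \<Rightarrow> bool" where
  "witnessed m e t \<longleftrightarrow>
     pair_witness m e (snd (snd t)) (fst t) (fst (snd t)) \<or>
     pair_witness m e (snd (snd t)) (fst (snd t)) (fst t)"

definition walk :: "nat \<Rightarrow> nat \<Rightarrow> link list \<Rightarrow> bool" where
  "walk m e ts \<longleftrightarrow> ts \<noteq> [] \<and> linked ts \<and> (\<forall>t\<in>set ts. witnessed m e t)"

lemma linked_code_walk_encode: "linked_code (walk_encode ts) \<longleftrightarrow> linked ts"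
  unfolding linked_code_def linked_def by (auto simp: less_diff_conv)

lemma endpoint_code_walk_encode: "endpoint_code x (walk_encode ts) \<longleftrightarrow> x \<in> points ts"
  unfolding endpoint_code_def points_def by (force simp: in_set_conv_nth)

lemma share_endpoint_code_walk_encode:
  "share_endpoint_code (walk_encode ts) (walk_encode us) \<longleftrightarrow> points ts \<inter> points us \<noteq> {}"
  unfolding share_endpoint_code_iff endpoint_code_walk_encode by blast

lemma walk_code_walk_encode: "walk_code m e (walk_encode ts) \<longleftrightarrow> walk m e ts"
proof -
  have "witnessed_links_code m e (walk_encode ts) \<longleftrightarrow> (\<forall>i<length ts. witnessed m e (ts ! i))"
    unfolding witnessed_links_code_def by (auto simp: witnessed_link_def witnessed_def)
  then show ?thesis
    unfolding walk_code_def walk_def linked_code_walk_encode by (auto simp: all_set_conv_all_nth)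
qed

lemma linked_Cons: "linked (t # ts) \<longleftrightarrow> (ts = [] \<or> (fst (snd t) = fst (hd ts) \<and> linked ts))"
  unfolding linked_def by (cases ts) (simp_all add: All_less_Suc2)

lemma linked_append:
  "linked ts \<Longrightarrow> linked us \<Longrightarrow> ts \<noteq> [] \<Longrightarrow> us \<noteq> [] \<Longrightarrow> fst (snd (last ts)) = fst (hd us) \<Longrightarrow>
   linked (ts @ us)"
proof (induction ts)
  case (Cons t ts)
  then show ?case
    by (cases "ts = []") (auto simp: linked_Cons)
qed simp

lemma linked_take: "linked ts \<Longrightarrow> linked (take n ts)"
  unfolding linked_def by auto

definition flip :: "link \<Rightarrow> link" where
  "flip t = (fst (snd t), fst t, snd (snd t))"

lemma flip_components [simp]:
  "fst (flip t) = fst (snd t)" "fst (snd (flip t)) = fst t" "snd (snd (flip t)) = snd (snd t)"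
  by (simp_all add: flip_def)

lemma witnessed_flip: "witnessed m e (flip t) \<longleftrightarrow> witnessed m e t"
  unfolding witnessed_def by auto

lemma linked_rev_map_flip: "linked ts \<Longrightarrow> linked (rev (map flip ts))"
proof (induction ts)
  case (Cons t ts)
  show ?case
  proof (cases "ts = []")
    case False
    with Cons have "linked (rev (map flip ts) @ [flip t])"
      by (intro linked_append) (auto simp: linked_Cons last_rev hd_map)
    then show ?thesis by simp
  qed (simp add: linked_def)
qed simp

lemma walk_rev_map_flip: "walk m e ts \<Longrightarrow> walk m e (rev (map flip ts))"
  unfolding walk_def using linked_rev_map_flip by (auto simp: witnessed_flip)

definition joined :: "nat \<Rightarrow> nat \<Rightarrow> nat \<Rightarrow> nat \<Rightarrow> bool" where
  "joined m e p q \<longleftrightarrow> (\<exists>ts. walk m e ts \<and> fst (hd ts) = p \<and> fst (snd (last ts)) = q)"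

lemma joined_sym: "joined m e p q \<Longrightarrow> joined m e q p"
proof -
  assume "joined m e p q"
  then obtain ts where "walk m e ts" "fst (hd ts) = p" "fst (snd (last ts)) = q"
    unfolding joined_def by blast
  then show "joined m e q p"
    unfolding joined_def using walk_rev_map_flip
    by (intro exI[of _ "rev (map flip ts)"]) (auto simp: walk_def hd_rev last_rev hd_map last_map)
qed

lemma joined_trans: "joined m e p q \<Longrightarrow> joined m e q r \<Longrightarrow> joined m e p r"
proof -
  assume "joined m e p q" "joined m e q r"
  then obtain ts us where ts: "walk m e ts" "fst (hd ts) = p" "fst (snd (last ts)) = q"
    and us: "walk m e us" "fst (hd us) = q" "fst (snd (last us)) = r"
    unfolding joined_def by blast
  then have "walk m e (ts @ us)"
    unfolding walk_def by (auto intro: linked_append)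
  then show "joined m e p r"
    unfolding joined_def using ts us by (intro exI[of _ "ts @ us"]) (auto simp: walk_def)
qed

lemma joined_hd_snd_nth: "walk m e ts \<Longrightarrow> i < length ts \<Longrightarrow> joined m e (fst (hd ts)) (fst (snd (ts ! i)))"
proof -
  assume ts: "walk m e ts" and i: "i < length ts"
  then have "walk m e (take (Suc i) ts)"
    unfolding walk_def by (auto intro: linked_take dest: in_set_takeD)
  moreover have "hd (take (Suc i) ts) = hd ts"
    using ts by (cases ts) (simp_all add: walk_def)
  moreover have "last (take (Suc i) ts) = ts ! i"
    using i by (simp add: take_Suc_conv_app_nth)
  ultimately show ?thesis
    unfolding joined_def by (intro exI[of _ "take (Suc i) ts"]) simp
qed

lemma joined_hd_fst_nth: "walk m e ts \<Longrightarrow> i < length ts \<Longrightarrow> joined m e (fst (hd ts)) (fst (ts ! i))"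
proof (cases i)
  case 0
  assume ts: "walk m e ts" and "i < length ts"
  have "joined m e (fst (hd ts)) (fst (snd (last ts)))"
    unfolding joined_def using ts by blast
  then have "joined m e (fst (hd ts)) (fst (hd ts))"
    by (metis joined_sym joined_trans)
  then show ?thesis
    using ts 0 by (simp add: walk_def hd_conv_nth)
next
  case (Suc j)
  assume ts: "walk m e ts" and "i < length ts"
  then have "fst (snd (ts ! j)) = fst (ts ! i)"
    using Suc by (simp add: walk_def linked_def)
  then show ?thesis
    using joined_hd_snd_nth[OF ts, of j] \<open>i < length ts\<close> Suc by simp
qed

lemma joined_points: "walk m e ts \<Longrightarrow> p \<in> points ts \<Longrightarrow> q \<in> points ts \<Longrightarrow> joined m e p q"
proof -
  assume ts: "walk m e ts"
  have "joined m e (fst (hd ts)) p" if p: "p \<in> points ts" for p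
  proof -
    obtain t where "t \<in> set ts" "p = fst t \<or> p = fst (snd t)"
      using p unfolding points_def by blast
    moreover obtain i where "i < length ts" "ts ! i = t"
      using \<open>t \<in> set ts\<close> by (meson in_set_conv_nth)
    ultimately show ?thesis
      using joined_hd_fst_nth[OF ts] joined_hd_snd_nth[OF ts] by auto
  qed
  then show "p \<in> points ts \<Longrightarrow> q \<in> points ts \<Longrightarrow> joined m e p q"
    by (metis joined_sym joined_trans)
qed

lemma joined_imp_walk: "joined m e p q \<Longrightarrow> \<exists>ts. walk m e ts \<and> p \<in> points ts \<and> q \<in> points ts"
proof -
  assume "joined m e p q"
  then obtain ts where ts: "walk m e ts" "fst (hd ts) = p" "fst (snd (last ts)) = q"
    unfolding joined_def by blast
  then have "hd ts \<in> set ts" "last ts \<in> set ts"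
    by (auto simp: walk_def)
  then show ?thesis
    using ts unfolding points_def by blast
qed

lemma points_nonempty: "walk m e ts \<Longrightarrow> points ts \<noteq> {}"
  unfolding walk_def points_def by auto

definition point_vertex :: "nat \<Rightarrow> nat \<Rightarrow> nat" where
  "point_vertex e x = 4 + npair 0 (npair e x)"

definition walk_vertex :: "nat \<Rightarrow> link list \<Rightarrow> nat" where
  "walk_vertex e ts = 4 + npair 1 (npair e (walk_encode ts))"

lemma vertex_simps [simp]:
  "point_vertex e x = point_vertex e' x' \<longleftrightarrow> e = e' \<and> x = x'"
  "walk_vertex e ts = walk_vertex e' ts' \<longleftrightarrow> e = e' \<and> ts = ts'"
  "point_vertex e x \<noteq> walk_vertex e' ts"
  "walk_vertex e' ts \<noteq> point_vertex e x"
  "4 \<le> point_vertex e x" "4 \<le> walk_vertex e ts"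
  by (simp_all add: point_vertex_def walk_vertex_def)

lemma ugraph_edge_point_walk:
  "ugraph_edge m (point_vertex e x) (walk_vertex e' ts) \<longleftrightarrow> e = e' \<and> x \<in> points ts \<and> walk m e' ts"
  unfolding ugraph_edge_def
  by (simp add: point_vertex_def walk_vertex_def endpoint_code_walk_encode walk_code_walk_encode)

lemma ugraph_edge_walk_point:
  "ugraph_edge m (walk_vertex e' ts) (point_vertex e x) \<longleftrightarrow> e = e' \<and> x \<in> points ts \<and> walk m e' ts"
  using ugraph_edge_sym ugraph_edge_point_walk by blast

lemma ugraph_edge_point_point: "\<not> ugraph_edge m (point_vertex e x) (point_vertex e' y)"
  unfolding ugraph_edge_def by (simp add: point_vertex_def)

lemma ugraph_edge_walk_walk:
  "ugraph_edge m (walk_vertex e ts) (walk_vertex e' us) \<longleftrightarrow>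
     ts \<noteq> us \<and> e = e' \<and> points ts \<inter> points us \<noteq> {} \<and> walk m e ts \<and> walk m e' us"
  unfolding ugraph_edge_def
  by (auto simp: walk_vertex_def share_endpoint_code_walk_encode walk_code_walk_encode)

lemma ugraph_edge_small: "a < 4 \<Longrightarrow> ugraph_edge m a b \<longleftrightarrow> b < 4 \<and> (a = Suc b \<or> b = Suc a)"
  unfolding ugraph_edge_def by auto

lemma vertex_cases:
  obtains "v < 4" | e x where "v = point_vertex e x" | e ts where "v = walk_vertex e ts"
    | "\<forall>m w. \<not> ugraph_edge m v w"
proof -
  consider "v < 4" | "4 \<le> v" "nfst (v - 4) = 0" | "4 \<le> v" "nfst (v - 4) = 1" | "4 \<le> v" "2 \<le> nfst (v - 4)"
    by linarith
  then show ?thesis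
  proof cases
    case 2
    then have "v = point_vertex (nfst (nsnd (v - 4))) (nsnd (nsnd (v - 4)))"
      unfolding point_vertex_def by (metis le_add_diff_inverse npair_nfst_nsnd)
    then show ?thesis using that by blast
  next
    case 3
    then have "v = walk_vertex (nfst (nsnd (v - 4)))
        (map (\<lambda>t. (nfst t, nsnd3 t, nthd3 t)) (list_decode (nsnd (nsnd (v - 4)))))"
      unfolding walk_vertex_def surj_walk_encode by (metis le_add_diff_inverse npair_nfst_nsnd)
    then show ?thesis using that by blast
  next
    case 4
    then have "\<not> ugraph_edge m v w" for m w
      unfolding ugraph_edge_def by auto
    then show ?thesis using that by blast
  qed (use that in blast)
qed

lemma ugraph_edge_bigE:
  assumes "ugraph_edge m c d" "4 \<le> c"
  obtains (point_walk) e x ts where "c = point_vertex e x" "d = walk_vertex e ts" "walk m e ts" "x \<in> points ts"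
    | (walk_point) e x ts where "c = walk_vertex e ts" "d = point_vertex e x" "walk m e ts" "x \<in> points ts"
    | (walk_walk) e ts us where "c = walk_vertex e ts" "d = walk_vertex e us" "walk m e ts" "walk m e us"
        "points ts \<inter> points us \<noteq> {}"
proof -
  have "4 \<le> d"
    using assms unfolding ugraph_edge_def by auto
  have dc: "ugraph_edge m d c"
    using assms(1) by (rule ugraph_edge_sym)
  show ?thesis
  proof (cases c rule: vertex_cases)
    case (2 e x)
    then show ?thesis
    proof (cases d rule: vertex_cases)
      case (3 e' ts)
      with assms(1) \<open>c = point_vertex e x\<close> show ?thesis
        by (intro that(1)[of e x ts]) (auto simp: ugraph_edge_point_walk)
    qed (use assms(1) dc \<open>4 \<le> d\<close> ugraph_edge_point_point in auto)
  next
    case (3 e ts)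
    then show ?thesis
    proof (cases d rule: vertex_cases)
      case (2 e' x)
      with assms(1) \<open>c = walk_vertex e ts\<close> show ?thesis
        by (intro that(2)[of e ts x]) (auto simp: ugraph_edge_walk_point)
    next
      case (3 e' us)
      with assms(1) \<open>c = walk_vertex e ts\<close> show ?thesis
        by (intro that(3)[of e ts us]) (auto simp: ugraph_edge_walk_walk)
    qed (use assms(1) dc \<open>4 \<le> d\<close> in auto)
  qed (use assms in auto)
qed

section \<open>The diameter is 3\<close>

definition vertex_points :: "nat \<Rightarrow> nat \<Rightarrow> nat \<Rightarrow> nat set \<Rightarrow> bool" where
  "vertex_points m v e S \<longleftrightarrow>
     (\<exists>x. v = point_vertex e x \<and> S = {x}) \<or> (\<exists>ts. v = walk_vertex e ts \<and> walk m e ts \<and> S = points ts)"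

lemma vertex_points_unique: "vertex_points m v e S \<Longrightarrow> vertex_points m v e' S' \<Longrightarrow> e = e' \<and> S = S'"
  unfolding vertex_points_def by auto

lemma vertex_points_nonempty: "vertex_points m v e S \<Longrightarrow> S \<noteq> {}"
  unfolding vertex_points_def using points_nonempty by auto

lemma vertex_points_ge_4: "vertex_points m v e S \<Longrightarrow> 4 \<le> v"
  unfolding vertex_points_def by auto

lemma ugraph_edge_joined:
  assumes "ugraph_edge m c d" "4 \<le> c"
  shows "\<exists>e Sc Sd r. vertex_points m c e Sc \<and> vertex_points m d e Sd \<and> r \<in> Sd \<and> (\<forall>q\<in>Sc. joined m e q r)"
  using assms
proof (cases rule: ugraph_edge_bigE)
  case (point_walk e x ts)
  then have "vertex_points m c e {x}" "vertex_points m d e (points ts)" "joined m e x x"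
    unfolding vertex_points_def by (auto intro: joined_points)
  then show ?thesis
    using point_walk(4) by blast
next
  case (walk_point e x ts)
  then have "vertex_points m c e (points ts)" "vertex_points m d e {x}" "\<forall>q\<in>points ts. joined m e q x"
    unfolding vertex_points_def by (auto intro: joined_points)
  then show ?thesis
    by blast
next
  case (walk_walk e ts us)
  then obtain r where "r \<in> points ts" "r \<in> points us"
    by blast
  with walk_walk have "vertex_points m c e (points ts)" "vertex_points m d e (points us)"
    "\<forall>q\<in>points ts. joined m e q r"
    unfolding vertex_points_def by (auto intro: joined_points)
  then show ?thesis
    using \<open>r \<in> points us\<close> by blast
qed

lemma reachable_joined:
  assumes "(a, c) \<in> (ugraph m)\<^sup>*" "4 \<le> a"
  shows "c = a \<or> (\<exists>e Sa Sc. vertex_points m a e Sa \<and> vertex_points m c e Sc \<and> (\<exists>p\<in>Sa. \<exists>q\<in>Sc. joined m e p q))"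
  using assms(1)
proof (induction rule: rtrancl_induct)
  case (step c d)
  then have cd: "ugraph_edge m c d"
    by simp
  from step.IH show ?case
  proof
    assume "c = a"
    then obtain e Sc Sd r where "vertex_points m a e Sc" "vertex_points m d e Sd" "r \<in> Sd"
      "\<forall>q\<in>Sc. joined m e q r"
      using ugraph_edge_joined[OF cd] assms(2) by blast
    then show ?thesis
      using vertex_points_nonempty by blast
  next
    assume "\<exists>e Sa Sc. vertex_points m a e Sa \<and> vertex_points m c e Sc \<and> (\<exists>p\<in>Sa. \<exists>q\<in>Sc. joined m e p q)"
    then obtain e Sa Sc p q where a: "vertex_points m a e Sa" "p \<in> Sa"
      and c: "vertex_points m c e Sc" "q \<in> Sc" and pq: "joined m e p q"
      by blast
    obtain e' Sc' Sd r where "vertex_points m c e' Sc'" "vertex_points m d e' Sd" "r \<in> Sd"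
      "\<forall>q\<in>Sc'. joined m e' q r"
      using ugraph_edge_joined[OF cd vertex_points_ge_4[OF c(1)]] by blast
    moreover from this(1) have "e' = e" "Sc' = Sc"
      using vertex_points_unique[OF _ c(1)] by blast+
    ultimately show ?thesis
      using a c pq joined_trans by blast
  qed
qed simp

lemma vertex_points_walk_vertex:
  assumes "vertex_points m v e S" "walk m e ts" "r \<in> S" "r \<in> points ts"
  shows "v = walk_vertex e ts \<or> ugraph_edge m v (walk_vertex e ts)"
  using assms unfolding vertex_points_def by (auto simp: ugraph_edge_point_walk ugraph_edge_walk_walk)

lemma relpow_2_ugraph: "ugraph_edge m a c \<Longrightarrow> ugraph_edge m c b \<Longrightarrow> (a, b) \<in> ugraph m ^^ 2"
  by (auto simp: numeral_2_eq_2 relpow_Suc_I)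

text \<open>Two connected vertices outside the path are both equal or adjacent to the vertex of a
  walk through one of their points each.\<close>

lemma distance_le_2:
  assumes "(a, b) \<in> (ugraph m)\<^sup>*" "4 \<le> a"
  shows "\<exists>k\<le>2. (a, b) \<in> ugraph m ^^ k"
proof (cases "a = b")
  case False
  then obtain e Sa Sb p q where ab: "vertex_points m a e Sa" "vertex_points m b e Sb" "p \<in> Sa" "q \<in> Sb"
    and "joined m e p q"
    using reachable_joined[OF assms] by blast
  then obtain ts where ts: "walk m e ts" "p \<in> points ts" "q \<in> points ts"
    using joined_imp_walk by blast
  let ?w = "walk_vertex e ts"
  have "a = ?w \<or> ugraph_edge m a ?w" "b = ?w \<or> ugraph_edge m ?w b"
    using vertex_points_walk_vertex[OF ab(1) ts(1) ab(3) ts(2)]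
      vertex_points_walk_vertex[OF ab(2) ts(1) ab(4) ts(3)] ugraph_edge_sym by blast+
  then have "ugraph_edge m a b \<or> (a, b) \<in> ugraph m ^^ 2"
    using False relpow_2_ugraph by blast
  then show ?thesis
  proof
    assume "ugraph_edge m a b"
    then show ?thesis
      by (intro exI[of _ 1]) simp
  qed (intro exI[of _ 2], simp)
qed (intro exI[of _ 0], simp)

lemma reachable_from_path: "(a, b) \<in> (ugraph m)\<^sup>* \<Longrightarrow> a < 4 \<Longrightarrow> b < 4"
  by (induction rule: rtrancl_induct) (auto simp: ugraph_edge_small)

lemma path_up: "i + j < 4 \<Longrightarrow> (i, i + j) \<in> ugraph m ^^ j"
  by (induction j) (auto simp: ugraph_edge_small intro: relpow_Suc_I)

lemma path_down: "i + j < 4 \<Longrightarrow> (i + j, i) \<in> ugraph m ^^ j"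
proof (induction j)
  case (Suc j)
  then have "(i + Suc j, i + j) \<in> ugraph m" "(i + j, i) \<in> ugraph m ^^ j"
    by (simp_all add: ugraph_edge_small)
  then show ?case
    by (rule relpow_Suc_I2)
qed simp

lemma paths_bounded_ugraph: "paths_bounded (ugraph m) 3"
  unfolding paths_bounded_def
proof (intro allI impI)
  fix a b assume ab: "(a, b) \<in> (ugraph m)\<^sup>*"
  show "\<exists>k\<le>3. (a, b) \<in> ugraph m ^^ k"
  proof (cases "a < 4")
    case True
    then have "b < 4"
      using reachable_from_path[OF ab] by blast
    show ?thesis
    proof (cases "a \<le> b")
      case True
      then show ?thesis
        using path_up[of a "b - a" m] \<open>b < 4\<close> by (intro exI[of _ "b - a"]) simp
    next
      case False
      then show ?thesis
        using path_down[of b "a - b" m] \<open>a < 4\<close> by (intro exI[of _ "a - b"]) simp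
    qed
  next
    case False
    then obtain k where "k \<le> 2" "(a, b) \<in> ugraph m ^^ k"
      using distance_le_2[OF ab] by auto
    then show ?thesis
      by (intro exI[of _ k]) simp
  qed
qed

lemma not_paths_bounded_ugraph_2: "\<not> paths_bounded (ugraph m) 2"
proof
  assume "paths_bounded (ugraph m) 2"
  moreover have "(0, 3) \<in> (ugraph m)\<^sup>*"
    using path_up[of 0 3 m] relpow_imp_rtrancl by simp
  ultimately obtain k where "k \<le> 2" "(0, 3) \<in> ugraph m ^^ k"
    unfolding paths_bounded_def by blast
  then show False
    by (auto simp: le_Suc_eq numeral_2_eq_2 ugraph_edge_small elim!: relpow_Suc_E)
qed

lemma graph_diameter_ugraph: "graph_diameter (ugraph m) 3"
  unfolding graph_diameter_def
proof (intro conjI allI impI paths_bounded_ugraph notI)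
  fix j :: nat assume "j < 3" "paths_bounded (ugraph m) j"
  then have "paths_bounded (ugraph m) 2"
    unfolding paths_bounded_def by (metis le_trans less_Suc_eq_le numeral_3_eq_3 numeral_2_eq_2)
  then show False
    using not_paths_bounded_ugraph_2 by blast
qed

section \<open>Connectedness is a universal Sigma^0_(m+1) equivalence relation\<close>

text \<open>By the diameter bound, w = npair c d codes the inner vertices of a path of length at most 3.\<close>

definition short_path :: "nat \<Rightarrow> nat \<Rightarrow> nat \<Rightarrow> nat \<Rightarrow> bool" where
  "short_path m w a b \<longleftrightarrow> a = b \<or> ugraph_edge m a b \<or> (ugraph_edge m a (nfst w) \<and> ugraph_edge m (nfst w) b) \<or>
     (ugraph_edge m a (nfst w) \<and> ugraph_edge m (nfst w) (nsnd w) \<and> ugraph_edge m (nsnd w) b)"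

lemma Pi_rel_short_path: "Pi_rel m 3 (\<lambda>ys. short_path m (ys ! 0) (ys ! 1) (ys ! 2))"
  unfolding short_path_def
  by (intro Pi_rel_disj Pi_rel_conj Pi_rel_compose2[OF Pi_rel_ugraph_edge] computable_imp_Pi_rel
      computable_rel_eq recursive_intros; simp)

lemma rtrancl_ugraph_iff: "(a, b) \<in> (ugraph m)\<^sup>* \<longleftrightarrow> (\<exists>w. short_path m w a b)"
proof
  assume "(a, b) \<in> (ugraph m)\<^sup>*"
  then obtain k where "k \<le> 3" "(a, b) \<in> ugraph m ^^ k"
    using paths_bounded_ugraph[of m] unfolding paths_bounded_def by blast
  then consider "(a, b) \<in> ugraph m ^^ 0" | "(a, b) \<in> ugraph m ^^ Suc 0" | "(a, b) \<in> ugraph m ^^ Suc (Suc 0)"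
    | "(a, b) \<in> ugraph m ^^ Suc (Suc (Suc 0))"
    by (metis le_SucE le_zero_eq numeral_3_eq_3)
  then show "\<exists>w. short_path m w a b"
  proof cases
    case 3
    then obtain c where "ugraph_edge m a c" "ugraph_edge m c b"
      by (auto elim!: relpow_Suc_E)
    then show ?thesis
      unfolding short_path_def by (intro exI[of _ "npair c 0"]) simp
  next
    case 4
    then obtain c d where "ugraph_edge m a c" "ugraph_edge m c d" "ugraph_edge m d b"
      by (auto elim!: relpow_Suc_E)
    then show ?thesis
      unfolding short_path_def by (intro exI[of _ "npair c d"]) simp
  qed (auto simp: short_path_def)
next
  assume "\<exists>w. short_path m w a b"
  then show "(a, b) \<in> (ugraph m)\<^sup>*"
    unfolding short_path_def
    by (meson in_ugraph_iff r_into_rtrancl rtrancl.rtrancl_refl rtrancl_trans)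
qed

lemma Sigma_binrel_rtrancl_ugraph: "Sigma_binrel (Suc m) ((ugraph m)\<^sup>*)"
  unfolding Sigma_binrel_def
  by (rule Sigma_rel_SucI[OF Pi_rel_short_path[unfolded Pi_rel_def]])
    (simp_all add: as_rel2_def rtrancl_ugraph_iff)

lemma equiv_rtrancl_ugraph: "equiv UNIV ((ugraph m)\<^sup>*)"
proof -
  have "sym (ugraph m)"
    by (rule symI) (simp add: ugraph_edge_sym)
  then show ?thesis
    by (intro equivI refl_rtrancl sym_rtrancl trans_rtrancl) auto
qed

context
  fixes F :: "(nat \<times> nat) set" and m e :: nat
  assumes F: "equiv UNIV F" and witnessed_in_F: "\<And>a b z. pair_witness m e z a b \<Longrightarrow> (a, b) \<in> F"
begin

lemma walk_ends_in_F: "walk m e ts \<Longrightarrow> (fst (hd ts), fst (snd (last ts))) \<in> F"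
proof (induction ts)
  case (Cons t ts)
  have "witnessed m e t"
    using Cons.prems by (simp add: walk_def)
  then have "(fst t, fst (snd t)) \<in> F \<or> (fst (snd t), fst t) \<in> F"
    unfolding witnessed_def using witnessed_in_F by blast
  then have "(fst t, fst (snd t)) \<in> F"
    using F unfolding equiv_def by (blast dest: symD)
  moreover have "ts \<noteq> [] \<Longrightarrow> fst (snd t) = fst (hd ts) \<and> walk m e ts"
    using Cons.prems by (auto simp: walk_def linked_Cons)
  ultimately show ?case
    using Cons.IH F unfolding equiv_def by (cases "ts = []") (auto dest: transD)
qed (simp add: walk_def)

lemma joined_in_F: "joined m e p q \<Longrightarrow> (p, q) \<in> F"
  unfolding joined_def using walk_ends_in_F by blast

lemma reachable_from_point_in_F:
  "(point_vertex e x, c) \<in> (ugraph m)\<^sup>* \<Longrightarrow> \<exists>S. vertex_points m c e S \<and> (\<forall>p\<in>S. (x, p) \<in> F)"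
proof (induction rule: rtrancl_induct)
  case base
  have "vertex_points m (point_vertex e x) e {x}"
    unfolding vertex_points_def by blast
  moreover have "(x, x) \<in> F"
    using F unfolding equiv_def refl_on_def by blast
  ultimately show ?case
    by blast
next
  case (step c d)
  then obtain S where S: "vertex_points m c e S" "\<forall>p\<in>S. (x, p) \<in> F"
    by blast
  obtain e' Sc Sd r where "vertex_points m c e' Sc" "vertex_points m d e' Sd" "r \<in> Sd"
    "\<forall>q\<in>Sc. joined m e' q r"
    using ugraph_edge_joined step.hyps(2) vertex_points_ge_4[OF S(1)] by force
  then have d: "vertex_points m d e Sd" "r \<in> Sd" and "\<forall>q\<in>S. joined m e q r"
    using vertex_points_unique[OF S(1)] by blast+
  moreover obtain q where "q \<in> S"
    using vertex_points_nonempty[OF S(1)] by blast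
  ultimately have "(x, r) \<in> F"
    using S(2) F joined_in_F unfolding equiv_def by (blast dest: transD)
  moreover have "p = r \<or> joined m e r p" if "p \<in> Sd" for p
    using d that unfolding vertex_points_def by (auto intro: joined_points)
  ultimately have "\<forall>p\<in>Sd. (x, p) \<in> F"
    using F joined_in_F unfolding equiv_def by (blast dest: transD)
  then show ?case
    using d by blast
qed

end

lemma point_vertices_connected_iff:
  assumes F: "equiv UNIV F" and F_iff: "\<And>x y. (x, y) \<in> F \<longleftrightarrow> (\<exists>z. pair_witness m e z x y)"
  shows "(point_vertex e x, point_vertex e y) \<in> (ugraph m)\<^sup>* \<longleftrightarrow> (x, y) \<in> F"
proof
  assume "(point_vertex e x, point_vertex e y) \<in> (ugraph m)\<^sup>*"
  then obtain S where "vertex_points m (point_vertex e y) e S" "\<forall>p\<in>S. (x, p) \<in> F"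
    using reachable_from_point_in_F[OF F] F_iff by blast
  then show "(x, y) \<in> F"
    unfolding vertex_points_def by auto
next
  assume "(x, y) \<in> F"
  then obtain z where "pair_witness m e z x y"
    using F_iff by blast
  then have "walk m e [(x, y, z)]"
    by (simp add: walk_def linked_def witnessed_def)
  then have "ugraph_edge m (point_vertex e x) (walk_vertex e [(x, y, z)])"
    "ugraph_edge m (walk_vertex e [(x, y, z)]) (point_vertex e y)"
    by (simp_all add: ugraph_edge_point_walk ugraph_edge_walk_point points_def)
  then show "(point_vertex e x, point_vertex e y) \<in> (ugraph m)\<^sup>*"
    by (meson in_ugraph_iff r_into_rtrancl rtrancl_into_rtrancl)
qed

lemma computable_fun_point_vertex: "computable_fun (point_vertex e)"
proof -
  have "recursive 1 (\<lambda>xs. point_vertex e (xs ! 0))"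
    unfolding point_vertex_def by (intro recursive_intros) simp
  then show ?thesis
    unfolding computable_fun_def recursive_def by auto
qed

lemma universal_rtrancl_ugraph: "universal_Sigma_eqrel (Suc m) ((ugraph m)\<^sup>*)"
  unfolding universal_Sigma_eqrel_def
proof (intro conjI allI impI equiv_rtrancl_ugraph Sigma_binrel_rtrancl_ugraph)
  fix F assume "equiv UNIV F \<and> Sigma_binrel (Suc m) F"
  then have F: "equiv UNIV F" and "Sigma_rel (Suc m) 2 (as_rel2 F)"
    by (simp_all add: Sigma_binrel_def)
  then obtain e where e: "\<forall>xs. length xs = 2 \<longrightarrow> (as_rel2 F xs \<longleftrightarrow> univ_Sigma m e (list_encode xs))"
    using univ_Sigma_universal by blast
  have "(x, y) \<in> F \<longleftrightarrow> (\<exists>z. pair_witness m e z x y)" for x y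
    using e[rule_format, of "[x, y]"]
    by (simp add: as_rel2_def univ_Sigma_def pair_witness_def list_encode_Cons
        del: list_encode.simps add: list_encode.simps(1))
  then show "\<exists>f. computable_fun f \<and> (\<forall>x y. (x, y) \<in> F \<longleftrightarrow> (f x, f y) \<in> (ugraph m)\<^sup>*)"
    using point_vertices_connected_iff[OF F] computable_fun_point_vertex by blast
qed

theorem proposition2p6:
  fixes n :: nat
  assumes "n \<ge> 1"
  shows "\<exists>E. universal_Sigma_eqrel n E \<and> Pi_graphable_diam (n - 1) E 3"
proof -
  obtain m where n: "n = Suc m"
    using assms by (cases n) auto
  have "Pi_graphable_diam m ((ugraph m)\<^sup>*) 3"
    unfolding Pi_graphable_diam_def
    using simple_graph_ugraph Pi_binrel_ugraph graph_diameter_ugraph by blast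
  then show ?thesis
    unfolding n using universal_rtrancl_ugraph by auto
qed

end
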